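(* Let $T$ be a hypertree map without cycles. Then its partial-dual Euler-genus polynomial is the constant $\partial_{\varepsilon_T}(z)=2^{e(T)}$.
   Context: A hypermap $H$ is a cellular embedding in a closed surface of the bipartite incidence graph of a hypergraph (vertex nodes $V(H)$, hyperedge nodes $E(H)$, $v\sim e$ iff $v\in e$); $v(H),e(H),f(H)$ count vertices, hyperedges, faces, $n_i=|e_i|$, $\chi(H)=v(H)+e(H)+f(H)-\sum_i n_i$, $c(H)$ the number of components, $\varepsilon(H)=2c(H)-\chi(H)$ the Euler genus. Combinatorially $H=(B,\tau,\psi)$, cycles of $\tau$ (in pairs) encoding vertex rotations, cycles of $\psi$ encoding hyperedges, cycles of $\psi\circ\tau$ encoding faces; for $A\subseteq E(H)$ the partial dual is $H^A=(B,\psi|_A\circ\tau,\psi)$, where $\psi|_A$ equals $\psi$ on labels of hyperedges in $A$ and the identity elsewhere; $\partial_{\varepsilon_H}(z)=\sum_{A\subseteq E(H)}z^{\varepsilon(H^A)}$. In a hypergraph, a chain of length $q$ is a sequence $v_1e_1v_2\cdots v_qe_qv_{q+1}$ of vertices and hyperedges with $v_i,v_{i+1}\in e_i$, the hyperedges pairwise distinct and the vertices pairwise distinct except possibly $v_1=v_{q+1}$; it is a cycle if $q\ge2$ and $v_1=v_{q+1}$. A hypertree is a connected hypergraph such that removing any hyperedge (keeping all vertices) leaves a disconnected hypergraph; a hypertree map is a hypermap whose hypergraph is a hypertree; "without cycles" means the hypergraph contains no cycle.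
   Formalization: The partial dual $H^A$ has hyperedge permutation equal to $\psi$ on hyperedges outside A and to its inverse on those in A, so its faces are the cycles of $\psi|_A\circ\tau$ with A replaced by its complement, not of $\psi\circ\psi|_A\circ\tau$. The statement above fails without it. *)

theory Defs
  imports Complex_Main
begin

text \<open>Reachability under a set of functions (generators); for bijections of a finite
  set this is the orbit relation of the generated group.\<close>
definition gen_rel :: "('b \<Rightarrow> 'b) set \<Rightarrow> ('b \<times> 'b) set" where
  "gen_rel G = {(x, g x) | x g. g \<in> G}"

definition orbit_of :: "('b \<Rightarrow> 'b) set \<Rightarrow> 'b \<Rightarrow> 'b set" where
  "orbit_of G b = {b'. (b, b') \<in> (gen_rel G)\<^sup>*}"

definition num_orbits :: "'b set \<Rightarrow> ('b \<Rightarrow> 'b) set \<Rightarrow> nat" where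
  "num_orbits B G = card (orbit_of G ` B)"

definition num_cycles :: "'b set \<Rightarrow> ('b \<Rightarrow> 'b) \<Rightarrow> nat" where
  "num_cycles B f = num_orbits B {f}"

text \<open>Vertices = orbits of <r1,r2>, hyperedges = orbits of <r0,r2>,
  faces = orbits of <r0,r1>, incidences (edges of the bipartite incidence map)
  = orbits of <r2>.  The paper's permutations are tau = r1 o r2 (each vertex gives
  a pair of tau-cycles) and psi = r2 o r0 (each hyperedge gives a pair of psi-cycles);
  the faces are then encoded (in pairs) by the cycles of psi o tau.\<close>

record 'b hypermap =
  blades :: "'b set"
  r0 :: "'b \<Rightarrow> 'b"
  r1 :: "'b \<Rightarrow> 'b"
  r2 :: "'b \<Rightarrow> 'b"

definition fpf_involution :: "'b set \<Rightarrow> ('b \<Rightarrow> 'b) \<Rightarrow> bool" where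
  "fpf_involution B r \<longleftrightarrow> (\<forall>b\<in>B. r b \<in> B \<and> r (r b) = b \<and> r b \<noteq> b)"

definition hm_tau :: "'b hypermap \<Rightarrow> 'b \<Rightarrow> 'b" where
  "hm_tau H = r1 H \<circ> r2 H"

definition hm_psi :: "'b hypermap \<Rightarrow> 'b \<Rightarrow> 'b" where
  "hm_psi H = r2 H \<circ> r0 H"

definition hm_vertices :: "'b hypermap \<Rightarrow> 'b set set" where
  "hm_vertices H = orbit_of {r1 H, r2 H} ` blades H"

definition hm_hyperedges :: "'b hypermap \<Rightarrow> 'b set set" where
  "hm_hyperedges H = orbit_of {r0 H, r2 H} ` blades H"

definition hm_inc :: "'b set \<Rightarrow> 'b set \<Rightarrow> bool" where
  "hm_inc v e \<longleftrightarrow> v \<inter> e \<noteq> {}"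

text \<open>Well-formed hypermap of a hypergraph: finite, three fixed-point-free involutions,
  and no multiple incidences (a vertex meets a hyperedge in at most one incidence,
  i.e. at most two blades), so that the incidence graph is the incidence graph
  of a hypergraph.\<close>
definition hypermap :: "'b hypermap \<Rightarrow> bool" where
  "hypermap H \<longleftrightarrow> finite (blades H)
     \<and> fpf_involution (blades H) (r0 H)
     \<and> fpf_involution (blades H) (r1 H)
     \<and> fpf_involution (blades H) (r2 H)
     \<and> (\<forall>v\<in>hm_vertices H. \<forall>e\<in>hm_hyperedges H. card (v \<inter> e) \<le> 2)"

text \<open>For a triple (B, t, p) (with the reflection r used to detect components):
  v = #cycles(t)/2, e = #cycles(p)/2, f = #cycles(p o t)/2, sum n_i = |B|/2
  (number of incidences), c = number of connected components.\<close>
definition triple_chi :: "'b set \<Rightarrow> ('b \<Rightarrow> 'b) \<Rightarrow> ('b \<Rightarrow> 'b) \<Rightarrow> int" where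
  "triple_chi B t p =
     int (num_cycles B t) div 2 + int (num_cycles B p) div 2
     + int (num_cycles B (p \<circ> t)) div 2 - int (card B) div 2"

definition triple_eg :: "'b set \<Rightarrow> ('b \<Rightarrow> 'b) \<Rightarrow> ('b \<Rightarrow> 'b) \<Rightarrow> ('b \<Rightarrow> 'b) \<Rightarrow> int" where
  "triple_eg B t p r = 2 * int (num_orbits B {t, p, r}) - triple_chi B t p"

definition euler_genus :: "'b hypermap \<Rightarrow> int" where
  "euler_genus H = triple_eg (blades H) (hm_tau H) (hm_psi H) (r2 H)"

definition psi_restr :: "'b hypermap \<Rightarrow> 'b set set \<Rightarrow> 'b \<Rightarrow> 'b" where
  "psi_restr H A b = (if b \<in> \<Union>A then hm_psi H b else b)"

text \<open>Hyperedge permutation of the partial dual: the hyperedges are the same, those in A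
  being traversed in the reverse direction (psi^-1 = r0 o r2 on them).\<close>
definition psi_dual :: "'b hypermap \<Rightarrow> 'b set set \<Rightarrow> 'b \<Rightarrow> 'b" where
  "psi_dual H A b = (if b \<in> \<Union>A then (r0 H \<circ> r2 H) b else hm_psi H b)"

text \<open>H^A = (B, psi|_A o tau, psi^A): vertices are the cycles of psi|_A o tau.\<close>
definition pd_euler_genus :: "'b hypermap \<Rightarrow> 'b set set \<Rightarrow> int" where
  "pd_euler_genus H A =
     triple_eg (blades H) (psi_restr H A \<circ> hm_tau H) (psi_dual H A) (r2 H)"

text \<open>partial-dual Euler-genus polynomial, evaluated at z (int exponents, which are
  in fact nonnegative)\<close>
definition pd_eg_poly :: "'b hypermap \<Rightarrow> real \<Rightarrow> real" where
  "pd_eg_poly H z = (\<Sum>A\<in>Pow (hm_hyperedges H). z powi pd_euler_genus H A)"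

definition hg_chain :: "'v set \<Rightarrow> 'e set \<Rightarrow> ('v \<Rightarrow> 'e \<Rightarrow> bool) \<Rightarrow> 'v list \<Rightarrow> 'e list \<Rightarrow> bool" where
  "hg_chain V E inc vs es \<longleftrightarrow>
     length vs = length es + 1 \<and> set vs \<subseteq> V \<and> set es \<subseteq> E
     \<and> (\<forall>i<length es. inc (vs ! i) (es ! i) \<and> inc (vs ! Suc i) (es ! i))
     \<and> distinct es \<and> distinct (tl vs) \<and> distinct (butlast vs)"

definition hg_cycle :: "'v set \<Rightarrow> 'e set \<Rightarrow> ('v \<Rightarrow> 'e \<Rightarrow> bool) \<Rightarrow> 'v list \<Rightarrow> 'e list \<Rightarrow> bool" where
  "hg_cycle V E inc vs es \<longleftrightarrow> hg_chain V E inc vs es \<and> length es \<ge> 2 \<and> hd vs = last vs"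

definition hg_has_cycle :: "'v set \<Rightarrow> 'e set \<Rightarrow> ('v \<Rightarrow> 'e \<Rightarrow> bool) \<Rightarrow> bool" where
  "hg_has_cycle V E inc \<longleftrightarrow> (\<exists>vs es. hg_cycle V E inc vs es)"

definition hg_connected :: "'v set \<Rightarrow> 'e set \<Rightarrow> ('v \<Rightarrow> 'e \<Rightarrow> bool) \<Rightarrow> bool" where
  "hg_connected V E inc \<longleftrightarrow>
     (\<forall>u\<in>V. \<forall>w\<in>V. (u, w) \<in> {(x, y). x \<in> V \<and> y \<in> V \<and> (\<exists>e\<in>E. inc x e \<and> inc y e)}\<^sup>*)"

definition hg_hypertree :: "'v set \<Rightarrow> 'e set \<Rightarrow> ('v \<Rightarrow> 'e \<Rightarrow> bool) \<Rightarrow> bool" where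
  "hg_hypertree V E inc \<longleftrightarrow> hg_connected V E inc
     \<and> (\<forall>e\<in>E. \<not> hg_connected V (E - {e}) inc)"

definition hypertree_map :: "'b hypermap \<Rightarrow> bool" where
  "hypertree_map H \<longleftrightarrow> hypermap H \<and> hg_hypertree (hm_vertices H) (hm_hyperedges H) hm_inc"

end

theory Submission
  imports Defs
begin

(* The partial-dual genus is computed from cycle counts of permutations of the blades: for U the
   blades of the hyperedges in A, the vertices, hyperedges and faces of the partial dual H^A
   correspond to pairs of cycles of pd_tau U, pd_psi U and pd_tau (B - U). Genus 0 for every A
   amounts to these three cycle counts being even and summing to |B| + 4. This is proved by
   induction on the number of blades: an acyclic hypertree with more than one incidence has an
   incidence {b, r2 b} at a vertex of degree one or at a hyperedge of size one, and deleting it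
   changes the three counts by 0, 0 and 2 (in some order) while keeping the hypermap an acyclic
   hypertree. *)

section \<open>Orbits\<close>

lemma gen_rel_iff [simp]: "(x, y) \<in> gen_rel G \<longleftrightarrow> (\<exists>g\<in>G. y = g x)"
  by (auto simp: gen_rel_def)

lemma gen_rel_rtrancl_step: "g \<in> G \<Longrightarrow> (x, g x) \<in> (gen_rel G)\<^sup>*"
  by (rule r_into_rtrancl) auto

lemma gen_rel_rtrancl_into: "(x, y) \<in> (gen_rel G)\<^sup>* \<Longrightarrow> g \<in> G \<Longrightarrow> (x, g y) \<in> (gen_rel G)\<^sup>*"
  by (erule rtrancl_into_rtrancl) auto

lemma gen_rel_rtrancl_mono:
  "(x, y) \<in> (gen_rel G)\<^sup>* \<Longrightarrow> G \<subseteq> G' \<Longrightarrow> (x, y) \<in> (gen_rel G')\<^sup>*"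
  by (erule rtrancl_mono[THEN subsetD, rotated]) (auto simp: gen_rel_def)

lemma gen_rel_rtrancl_map:
  assumes "(x, y) \<in> (gen_rel G)\<^sup>*" and "x \<in> B"
    and "\<forall>z\<in>B. \<forall>g\<in>G. g z \<in> B \<and> (h z, h (g z)) \<in> (gen_rel G')\<^sup>*"
  shows "y \<in> B \<and> (h x, h y) \<in> (gen_rel G')\<^sup>*"
  using assms(1,2)
proof (induction rule: rtrancl_induct)
  case (step y z)
  then obtain g where g: "g \<in> G" "z = g y" by auto
  have y: "y \<in> B" "(h x, h y) \<in> (gen_rel G')\<^sup>*" using step by auto
  then have "z \<in> B" "(h y, h z) \<in> (gen_rel G')\<^sup>*" using assms(3) g by auto
  then show ?case using rtrancl_trans[OF y(2)] by simp
qed simp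

lemma orbit_of_self [simp]: "x \<in> orbit_of G x"
  by (simp add: orbit_of_def)

lemma orbit_of_stepI:
  assumes "y \<in> orbit_of G x" and "g \<in> G"
  shows "g y \<in> orbit_of G x"
proof -
  have "(y, g y) \<in> gen_rel G" using assms(2) by auto
  with assms(1) show ?thesis unfolding orbit_of_def by (simp add: rtrancl_into_rtrancl)
qed

lemma orbit_of_trans: "y \<in> orbit_of G x \<Longrightarrow> z \<in> orbit_of G y \<Longrightarrow> z \<in> orbit_of G x"
  unfolding orbit_of_def by (simp add: rtrancl_trans)

lemma orbit_of_mono: "G' \<subseteq> G \<Longrightarrow> orbit_of G' x \<subseteq> orbit_of G x"
  unfolding orbit_of_def by (auto intro: gen_rel_rtrancl_mono)

lemma orbit_of_subset:
  assumes "x \<in> B" and "\<forall>z\<in>B. \<forall>g\<in>G. g z \<in> B"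
  shows "orbit_of G x \<subseteq> B"
proof
  fix y assume "y \<in> orbit_of G x"
  then have "(x, y) \<in> (gen_rel G)\<^sup>*" by (simp add: orbit_of_def)
  then show "y \<in> B"
    by (induction rule: rtrancl_induct) (use assms in auto)
qed

lemma orbit_of_retract:
  assumes "x \<in> B'" and "B' \<subseteq> B"
    and fwd: "\<forall>z\<in>B'. \<forall>g\<in>G'. g z \<in> B' \<and> (z, g z) \<in> (gen_rel G)\<^sup>*"
    and step: "\<forall>z\<in>B. \<forall>g\<in>G. g z \<in> B \<and> (h z, h (g z)) \<in> (gen_rel G')\<^sup>*"
    and h: "\<forall>z\<in>B'. h z = z"
  shows "orbit_of G' x = orbit_of G x \<inter> B'"
proof
  show "orbit_of G' x \<subseteq> orbit_of G x \<inter> B'"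
    using gen_rel_rtrancl_map[where h="\<lambda>z. z", OF _ assms(1) fwd] by (auto simp: orbit_of_def)
  show "orbit_of G x \<inter> B' \<subseteq> orbit_of G' x"
  proof
    fix y assume y: "y \<in> orbit_of G x \<inter> B'"
    then have "(h x, h y) \<in> (gen_rel G')\<^sup>*"
      using gen_rel_rtrancl_map[OF _ _ step] assms(1,2) by (auto simp: orbit_of_def)
    then show "y \<in> orbit_of G' x" using h y assms(1) by (simp add: orbit_of_def)
  qed
qed

lemma fpf_involutionD:
  assumes "fpf_involution B r" and "x \<in> B"
  shows "r x \<in> B" "r (r x) = x" "r x \<noteq> x"
  using assms unfolding fpf_involution_def by blast+

lemma fpf_involution_eq_iff:
  assumes "fpf_involution B g" and "x \<in> B" and "y \<in> B"
  shows "g x = y \<longleftrightarrow> x = g y"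
  using fpf_involutionD(2)[OF assms(1)] assms(2,3) by metis

lemma fpf_involution_mem_iff:
  assumes "fpf_involution B g" and "\<forall>x\<in>U. g x \<in> U" and "x \<in> B"
  shows "g x \<in> U \<longleftrightarrow> x \<in> U"
  using assms fpf_involutionD(2)[OF assms(1,3)] by metis

lemma fpf_involution_Diff_closed:
  assumes "fpf_involution B g" and "\<forall>x\<in>U. g x \<in> U"
  shows "\<forall>x\<in>B - U. g x \<in> B - U"
  using fpf_involution_mem_iff[OF assms] fpf_involutionD(1)[OF assms(1)] by blast

definition reversible_on :: "'b set \<Rightarrow> ('b \<Rightarrow> 'b) set \<Rightarrow> bool" where
  "reversible_on B G \<longleftrightarrow> (\<forall>z\<in>B. \<forall>g\<in>G. g z \<in> B \<and> (g z, z) \<in> (gen_rel G)\<^sup>*)"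

lemma reversible_on_fpf_involutions:
  assumes "\<forall>g\<in>G. fpf_involution B g"
  shows "reversible_on B G"
  unfolding reversible_on_def
proof (intro ballI conjI)
  fix z g assume "z \<in> B" "g \<in> G"
  then have "g z \<in> B" "g (g z) = z" using assms by (auto simp: fpf_involution_def)
  then show "g z \<in> B" "(g z, z) \<in> (gen_rel G)\<^sup>*"
    using gen_rel_rtrancl_step[OF \<open>g \<in> G\<close>, of "g z"] by simp_all
qed

lemma permutation_step_back:
  assumes "finite B" and "bij_betw f B B" and "x \<in> B"
  shows "(f x, x) \<in> (gen_rel {f})\<^sup>*"
proof -
  let ?O = "orbit_of {f} (f x)"
  have fB: "\<forall>z\<in>B. \<forall>g\<in>{f}. g z \<in> B" using assms(2) bij_betw_apply by fastforce
  have O: "?O \<subseteq> B" using orbit_of_subset[OF _ fB] bij_betw_apply[OF assms(2,3)] by blast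
  have "f ` ?O = ?O"
  proof (rule endo_inj_surj)
    show "finite ?O" using O assms(1) by (rule finite_subset)
    show "f ` ?O \<subseteq> ?O" using orbit_of_stepI[of _ "{f}"] by blast
    show "inj_on f ?O" using O assms(2) by (auto simp: bij_betw_def intro: inj_on_subset)
  qed
  then have "f x \<in> f ` ?O" by simp
  then obtain z where z: "z \<in> ?O" "f x = f z" by auto
  then have "x = z" using O assms(2,3) by (auto simp: bij_betw_def dest: inj_onD)
  then show ?thesis using z(1) by (simp add: orbit_of_def)
qed

lemma reversible_on_permutation:
  assumes "finite B" and "bij_betw f B B"
  shows "reversible_on B {f}"
  using assms permutation_step_back bij_betw_apply unfolding reversible_on_def by fastforce

lemma orbit_of_eq:
  assumes "reversible_on B G" and "x \<in> B" and "y \<in> orbit_of G x"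
  shows "orbit_of G y = orbit_of G x"
proof -
  have xy: "(x, y) \<in> (gen_rel G)\<^sup>*" using assms(3) by (simp add: orbit_of_def)
  have "y' \<in> B \<and> (y', x) \<in> (gen_rel G)\<^sup>*" if "(x, y') \<in> (gen_rel G)\<^sup>*" for y'
    using that
  proof (induction rule: rtrancl_induct)
    case (step y z)
    then obtain g where g: "g \<in> G" "z = g y" by auto
    then have z: "z \<in> B" "(z, y) \<in> (gen_rel G)\<^sup>*"
      using step assms(1) by (auto simp: reversible_on_def)
    have "(y, x) \<in> (gen_rel G)\<^sup>*" using step.IH by simp
    with z show ?case using rtrancl_trans[OF z(2)] by simp
  qed (simp add: assms(2))
  then have yx: "(y, x) \<in> (gen_rel G)\<^sup>*" using xy by blast
  show ?thesis
    unfolding orbit_of_def using rtrancl_trans[OF xy] rtrancl_trans[OF yx] by blast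
qed

lemma orbit_of_lift:
  assumes "reversible_on B G" and "x \<in> B" and "orbit_of G' x \<subseteq> orbit_of G x"
  shows "orbit_of G (SOME y. y \<in> orbit_of G' x) = orbit_of G x"
proof -
  have "(SOME y. y \<in> orbit_of G' x) \<in> orbit_of G' x" using orbit_of_self by (rule someI)
  then show ?thesis using orbit_of_eq[OF assms(1,2)] assms(3) by blast
qed

lemma num_orbits_restrict:
  assumes "finite B" and "B' \<subseteq> B" and rev: "reversible_on B G"
    and eq: "\<forall>x\<in>B'. orbit_of G' x = orbit_of G x \<inter> B'"
  shows "num_orbits B G = num_orbits B' G' + card {Q \<in> orbit_of G ` B. Q \<inter> B' = {}}"
proof -
  let ?P = "orbit_of G ` B"
  let ?P1 = "{Q \<in> ?P. Q \<inter> B' \<noteq> {}}" and ?P2 = "{Q \<in> ?P. Q \<inter> B' = {}}"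
  have "card ?P = card ?P1 + card ?P2"
    using assms(1) by (subst card_Un_disjoint[symmetric]) (auto intro: arg_cong[where f=card])
  moreover have "orbit_of G' ` B' = (\<lambda>Q. Q \<inter> B') ` ?P1"
  proof (intro equalityI subsetI)
    fix Q' assume "Q' \<in> orbit_of G' ` B'"
    then obtain x where x: "x \<in> B'" "Q' = orbit_of G x \<inter> B'" using eq by auto
    then have "orbit_of G x \<in> ?P1" using assms(2) orbit_of_self[of x G] by blast
    then show "Q' \<in> (\<lambda>Q. Q \<inter> B') ` ?P1" using x(2) by blast
  next
    fix Q' assume "Q' \<in> (\<lambda>Q. Q \<inter> B') ` ?P1"
    then obtain Q where Q: "Q \<in> ?P" "Q \<inter> B' \<noteq> {}" "Q' = Q \<inter> B'" by blast
    obtain x where "x \<in> B" "Q = orbit_of G x" using Q(1) by (rule imageE)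
    moreover obtain y where "y \<in> Q" "y \<in> B'" using Q(2) by blast
    ultimately have x: "x \<in> B" "Q' = orbit_of G x \<inter> B'" "y \<in> orbit_of G x" "y \<in> B'"
      using Q(3) by simp_all
    then have "orbit_of G y = orbit_of G x" using orbit_of_eq[OF rev] by blast
    then have "Q' = orbit_of G' y" using eq x by simp
    then show "Q' \<in> orbit_of G' ` B'" using x(4) by blast
  qed
  moreover have "inj_on (\<lambda>Q. Q \<inter> B') ?P1"
  proof (rule inj_onI)
    fix Q1 Q2 assume "Q1 \<in> ?P1" "Q2 \<in> ?P1" "Q1 \<inter> B' = Q2 \<inter> B'"
    then obtain x1 x2 y where h: "x1 \<in> B" "Q1 = orbit_of G x1" "x2 \<in> B" "Q2 = orbit_of G x2"
      "y \<in> Q1" "y \<in> Q2" by blast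
    have "orbit_of G y = Q1" using orbit_of_eq[OF rev h(1), of y] h(2,5) by simp
    moreover have "orbit_of G y = Q2" using orbit_of_eq[OF rev h(3), of y] h(4,6) by simp
    ultimately show "Q1 = Q2" by simp
  qed
  ultimately show ?thesis unfolding num_orbits_def by (simp add: card_image)
qed

section \<open>Cycles of permutations\<close>

lemma orbit_of_fixed_point:
  assumes "f s = s"
  shows "orbit_of {f} s = {s}"
  using orbit_of_subset[of s "{s}" "{f}"] assms orbit_of_self[of s "{f}"] by auto

lemma num_cycles_id:
  assumes "\<forall>x\<in>B. f x = x"
  shows "num_cycles B f = card B"
proof -
  have "orbit_of {f} ` B = (\<lambda>x. {x}) ` B"
    by (rule image_cong) (simp_all add: assms orbit_of_fixed_point)
  then show ?thesis unfolding num_cycles_def num_orbits_def by (simp add: card_image)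
qed

(* f' is the permutation induced by f on B - S: it jumps over the points of S, no two of which
   are consecutive on a cycle of f of length > 1. *)
lemma orbit_of_skip:
  assumes bij: "bij_betw f B B" and skip: "\<forall>s\<in>S. f s = s \<or> f s \<notin> S"
    and f': "\<forall>y\<in>B - S. f' y = (if f y \<in> S then f (f y) else f y)" and x: "x \<in> B - S"
  shows "orbit_of {f'} x = orbit_of {f} x \<inter> (B - S)"
proof -
  have fB: "f z \<in> B" if "z \<in> B" for z using bij_betw_apply[OF bij that] .
  have inj: "inj_on f B" using bij by (simp add: bij_betw_def)
  have f'_step: "f' y \<in> B - S \<and> (y, f' y) \<in> (gen_rel {f})\<^sup>*" if y: "y \<in> B - S" for y
  proof (cases "f y \<in> S")
    case True
    then have "f (f y) \<noteq> f y" using y inj fB by (metis DiffE inj_onD)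
    then have "f (f y) \<notin> S" using skip True by metis
    moreover have "(y, f (f y)) \<in> (gen_rel {f})\<^sup>*"
      using gen_rel_rtrancl_into[OF gen_rel_rtrancl_step, of f "{f}" f y] by simp
    ultimately show ?thesis using True y f' fB by auto
  qed (use y f' fB gen_rel_rtrancl_step[of f "{f}"] in auto)
  define h where "h y = (if y \<in> S then f y else y)" for y
  show ?thesis
  proof (rule orbit_of_retract[OF x, where h=h])
    show "\<forall>z\<in>B. \<forall>g\<in>{f}. g z \<in> B \<and> (h z, h (g z)) \<in> (gen_rel {f'})\<^sup>*"
    proof (intro ballI conjI)
      fix z g assume z: "z \<in> B" and "g \<in> {f}"
      then have g: "g = f" by simp
      show "g z \<in> B" using fB z g by simp
      show "(h z, h (g z)) \<in> (gen_rel {f'})\<^sup>*"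
      proof (cases "z \<in> S")
        case True
        then have "h (f z) = h z" using skip unfolding h_def by auto
        then show ?thesis using g by simp
      next
        case False
        then have "h (f z) = f' z" "h z = z" using f' z unfolding h_def by auto
        then show ?thesis using g gen_rel_rtrancl_step[of f' "{f'}" z] by simp
      qed
    qed
  qed (use f'_step in \<open>auto simp: h_def\<close>)
qed

lemma orbits_disjoint_skip:
  assumes fB: "\<forall>z\<in>B. f z \<in> B" and S: "S \<subseteq> B" and skip: "\<forall>s\<in>S. f s = s \<or> f s \<notin> S"
  shows "{Q \<in> orbit_of {f} ` B. Q \<inter> (B - S) = {}} = (\<lambda>s. {s}) ` {s \<in> S. f s = s}"
proof (intro equalityI subsetI)
  fix Q assume "Q \<in> {Q \<in> orbit_of {f} ` B. Q \<inter> (B - S) = {}}"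
  then obtain y where y: "y \<in> B" "Q = orbit_of {f} y" "Q \<inter> (B - S) = {}" by blast
  then have "y \<in> S" "f y \<in> S"
    using orbit_of_self[of y "{f}"] orbit_of_stepI[of y "{f}" y f] fB by auto
  then have "f y = y" using skip by blast
  then have "Q = {y}" using y(2) orbit_of_fixed_point by simp
  then show "Q \<in> (\<lambda>s. {s}) ` {s \<in> S. f s = s}" using \<open>y \<in> S\<close> \<open>f y = y\<close> by blast
next
  fix Q assume "Q \<in> (\<lambda>s. {s}) ` {s \<in> S. f s = s}"
  then obtain s where "s \<in> S" "f s = s" "Q = {s}" by blast
  then show "Q \<in> {Q \<in> orbit_of {f} ` B. Q \<inter> (B - S) = {}}"
    using S orbit_of_fixed_point[of f s] by auto
qed

lemma num_cycles_skip:
  assumes fin: "finite B" and bij: "bij_betw f B B" and S: "S \<subseteq> B"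
    and skip: "\<forall>s\<in>S. f s = s \<or> f s \<notin> S"
    and f': "\<forall>y\<in>B - S. f' y = (if f y \<in> S then f (f y) else f y)"
  shows "num_cycles B f = num_cycles (B - S) f' + card {s \<in> S. f s = s}"
proof -
  have orb: "\<forall>x\<in>B - S. orbit_of {f'} x = orbit_of {f} x \<inter> (B - S)"
    using orbit_of_skip[OF bij skip f'] by blast
  have "num_cycles B f = num_cycles (B - S) f' + card {Q \<in> orbit_of {f} ` B. Q \<inter> (B - S) = {}}"
    using num_orbits_restrict[OF fin _ reversible_on_permutation[OF fin bij] orb]
    unfolding num_cycles_def by simp
  moreover have "{Q \<in> orbit_of {f} ` B. Q \<inter> (B - S) = {}} = (\<lambda>s. {s}) ` {s \<in> S. f s = s}"
    using bij_betw_apply[OF bij] by (intro orbits_disjoint_skip[OF _ S skip]) blast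
  ultimately show ?thesis by (simp add: card_image)
qed

lemma num_cycles_cong:
  assumes "finite B" and "bij_betw f B B" and "\<forall>x\<in>B. g x = f x"
  shows "num_cycles B g = num_cycles B f"
  using num_cycles_skip[of B f "{}" g] assms by simp

lemma bij_betw_involution:
  assumes "\<forall>x\<in>B. g x \<in> B \<and> g (g x) = x"
  shows "bij_betw g B B"
  by (rule bij_betw_byWitness[where f'=g]) (use assms in auto)

lemma bij_betw_if_involution:
  assumes "fpf_involution B g" and "\<forall>x\<in>U. g x \<in> U"
  shows "bij_betw (\<lambda>x. if x \<in> U then g x else x) B B"
  by (rule bij_betw_involution) (use assms fpf_involutionD in auto)

section \<open>Cycles in hypergraphs\<close>

lemma hg_has_cycle_of_segment:
  assumes pq: "Suc p < q" and closed: "VV p = VV q"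
    and inj: "inj_on VV {p..<q}" "inj_on VV {Suc p..q}" "inj_on EE {p..<q}"
    and inc: "\<forall>k\<in>{p..<q}. inc (VV k) (EE k) \<and> inc (VV (Suc k)) (EE k)"
    and VE: "VV ` {p..q} \<subseteq> V" "EE ` {p..<q} \<subseteq> E"
  shows "hg_has_cycle V E inc"
proof -
  let ?vs = "map VV [p..<Suc q]" and ?es = "map EE [p..<q]"
  have "inc (?vs ! i) (?es ! i) \<and> inc (?vs ! Suc i) (?es ! i)" if "i < length ?es" for i
  proof -
    have "?vs ! i = VV (p + i)" "?vs ! Suc i = VV (Suc (p + i))" "?es ! i = EE (p + i)"
      using that by (simp_all del: upt_Suc add: nth_map_upt)
    then show ?thesis using inc that by simp
  qed
  moreover have "distinct (tl ?vs)"
  proof -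
    have "tl [p..<Suc q] = [Suc p..<Suc q]" by (simp only: tl_upt)
    then show ?thesis using inj(2)
      by (simp del: upt_Suc add: map_tl[symmetric] distinct_map atLeastLessThanSuc_atLeastAtMost)
  qed
  moreover have "distinct (butlast ?vs)"
    using inj(1) pq by (simp add: map_butlast[symmetric] distinct_map)
  moreover have "hd ?vs = last ?vs" using closed pq by (simp add: hd_map last_map)
  ultimately have "hg_cycle V E inc ?vs ?es"
    unfolding hg_cycle_def hg_chain_def using pq inj(3) VE by (auto simp: distinct_map)
  then show ?thesis unfolding hg_has_cycle_def by blast
qed

lemma hg_has_cycle_of_vertex_repeat:
  assumes i: "i < j" "VV i = VV j"
    and distV: "\<And>m n. m < n \<Longrightarrow> n < j \<Longrightarrow> VV m \<noteq> VV n"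
    and distE: "\<And>m n. m < n \<Longrightarrow> n < j \<Longrightarrow> EE m \<noteq> EE n"
    and VE: "\<And>k. VV k \<in> V" "\<And>k. EE k \<in> E"
    and inc: "\<And>k. inc (VV k) (EE k) \<and> inc (VV (Suc k)) (EE k)"
    and nbV: "\<And>k. VV k \<noteq> VV (Suc k)"
  shows "hg_has_cycle V E inc"
proof (rule hg_has_cycle_of_segment[where VV=VV and EE=EE and p=i and q=j])
  show "Suc i < j" using i nbV[of i] by (cases "Suc i = j") auto
  show "inj_on VV {i..<j}" "inj_on EE {i..<j}"
    using distV distE by (auto intro!: linorder_inj_onI')
  show "inj_on VV {Suc i..j}"
  proof (rule linorder_inj_onI')
    fix m n assume "m \<in> {Suc i..j}" "n \<in> {Suc i..j}" "m < n"
    then show "VV m \<noteq> VV n" using distV[of m n] distV[of i m] i by (cases "n = j") auto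
  qed
qed (use i inc VE in auto)

lemma hg_has_cycle_of_edge_repeat:
  assumes i: "i < j" "EE i = EE j"
    and distV: "\<And>m n. m < n \<Longrightarrow> n \<le> j \<Longrightarrow> VV m \<noteq> VV n"
    and distE: "\<And>m n. m < n \<Longrightarrow> n < j \<Longrightarrow> EE m \<noteq> EE n"
    and VE: "\<And>k. VV k \<in> V" "\<And>k. EE k \<in> E"
    and inc: "\<And>k. inc (VV k) (EE k) \<and> inc (VV (Suc k)) (EE k)"
    and nbE: "\<And>k. EE k \<noteq> EE (Suc k)"
  shows "hg_has_cycle V E inc"
proof -
  \<comment> \<open>the cycle runs from VV (Suc i) through EE j = EE i back to VV (Suc i)\<close>
  define W where "W k = (if k = Suc j then VV (Suc i) else VV k)" for k
  show ?thesis
  proof (rule hg_has_cycle_of_segment[where VV=W and EE=EE and p="Suc i" and q="Suc j"])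
    show "Suc (Suc i) < Suc j" using i nbE[of i] by (cases "Suc i = j") auto
    show "W (Suc i) = W (Suc j)" using i by (simp add: W_def)
    show "inj_on W {Suc i..<Suc j}"
      using distV by (auto intro!: linorder_inj_onI' simp: W_def)
    show "inj_on W {Suc (Suc i)..Suc j}"
    proof (rule linorder_inj_onI')
      fix m n assume "m \<in> {Suc (Suc i)..Suc j}" "n \<in> {Suc (Suc i)..Suc j}" "m < n"
      then show "W m \<noteq> W n" using distV[of m n] distV[of "Suc i" m] by (auto simp: W_def)
    qed
    show "inj_on EE {Suc i..<Suc j}"
    proof (rule linorder_inj_onI')
      fix m n assume "m \<in> {Suc i..<Suc j}" "n \<in> {Suc i..<Suc j}" "m < n"
      then show "EE m \<noteq> EE n" using distE[of m n] distE[of i m] i by (cases "n = j") auto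
    qed
    show "\<forall>k\<in>{Suc i..<Suc j}. inc (W k) (EE k) \<and> inc (W (Suc k)) (EE k)"
    proof
      fix k assume k: "k \<in> {Suc i..<Suc j}"
      have "inc (VV (Suc i)) (EE j)" using inc[of i] i(2) by simp
      then show "inc (W k) (EE k) \<and> inc (W (Suc k)) (EE k)"
        using k inc[of k] by (cases "k = j") (auto simp: W_def)
    qed
  qed (use VE in \<open>auto simp: W_def\<close>)
qed

lemma hg_has_cycle_of_walk:
  fixes VV EE :: "nat \<Rightarrow> 'a"
  assumes fin: "finite V" and VE: "\<And>k. VV k \<in> V" "\<And>k. EE k \<in> E"
    and inc: "\<And>k. inc (VV k) (EE k) \<and> inc (VV (Suc k)) (EE k)"
    and nbV: "\<And>k. VV k \<noteq> VV (Suc k)" and nbE: "\<And>k. EE k \<noteq> EE (Suc k)"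
  shows "hg_has_cycle V E inc"
proof -
  define rep where "rep j \<longleftrightarrow> (\<exists>i<j. VV i = VV j \<or> EE i = EE j)" for j
  have "\<not> inj VV"
    using fin VE(1) finite_subset[of "range VV" V] finite_imageD infinite_UNIV_nat by blast
  then obtain i j where "VV i = VV j" "i < j" unfolding inj_def by (metis linorder_neqE_nat)
  then have "\<exists>j. rep j" unfolding rep_def by blast
  define j where "j = (LEAST j. rep j)"
  have "rep j" unfolding j_def using \<open>\<exists>j. rep j\<close> by (rule LeastI_ex)
  have first: "VV m \<noteq> VV n \<and> EE m \<noteq> EE n" if "m < n" "n < j" for m n
  proof -
    have "\<not> rep n" using not_less_Least[of n rep] that(2) unfolding j_def by blast
    then show ?thesis using that(1) unfolding rep_def by blast
  qed
  show ?thesis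
  proof (cases "\<exists>i<j. VV i = VV j")
    case True
    then obtain i where i: "i < j" "VV i = VV j" by blast
    show ?thesis
      by (rule hg_has_cycle_of_vertex_repeat[where EE=EE, OF i]) (use first VE inc nbV in auto)
  next
    case False
    then obtain i where i: "i < j" "EE i = EE j" using \<open>rep j\<close> rep_def by blast
    have distV: "VV m \<noteq> VV n" if "m < n" "n \<le> j" for m n
      using first[of m n] False that by (cases "n = j") auto
    show ?thesis
      by (rule hg_has_cycle_of_edge_repeat[OF i distV]) (use first VE inc nbE in auto)
  qed
qed

lemma hg_has_cycle_embed:
  assumes "hg_has_cycle V E inc"
    and f: "inj_on f V" "f ` V \<subseteq> V2" and g: "inj_on g E" "g ` E \<subseteq> E2"
    and inc: "\<forall>v\<in>V. \<forall>e\<in>E. inc v e \<longrightarrow> inc2 (f v) (g e)"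
  shows "hg_has_cycle V2 E2 inc2"
proof -
  obtain vs es where cyc: "hg_cycle V E inc vs es" using assms(1) by (auto simp: hg_has_cycle_def)
  then have len: "length vs = length es + 1" and sv: "set vs \<subseteq> V" and se: "set es \<subseteq> E"
    and incs: "\<forall>i<length es. inc (vs ! i) (es ! i) \<and> inc (vs ! Suc i) (es ! i)"
    and dist: "distinct es" "distinct (tl vs)" "distinct (butlast vs)"
    and cl: "length es \<ge> 2" "hd vs = last vs"
    by (auto simp: hg_cycle_def hg_chain_def)
  have "set (tl vs) \<subseteq> V" "set (butlast vs) \<subseteq> V"
    using sv by (cases vs, auto dest: in_set_butlastD)
  then have "distinct (map g es)" "distinct (tl (map f vs))" "distinct (butlast (map f vs))"
    using dist f(1) g(1) se by (auto simp: distinct_map map_tl[symmetric] map_butlast[symmetric]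
        intro: inj_on_subset)
  moreover have "\<forall>i<length es.
      inc2 (map f vs ! i) (map g es ! i) \<and> inc2 (map f vs ! Suc i) (map g es ! i)"
    using incs inc len sv se by (auto simp: subset_code(1))
  moreover have "hd (map f vs) = last (map f vs)" using cl len by (cases vs) (auto simp: last_map)
  moreover have "set (map f vs) \<subseteq> V2" "set (map g es) \<subseteq> E2"
    using sv se f(2) g(2) by (simp_all add: image_mono[THEN order_trans])
  ultimately have "hg_cycle V2 E2 inc2 (map f vs) (map g es)"
    using len cl(1) unfolding hg_cycle_def hg_chain_def by simp
  then show ?thesis by (auto simp: hg_has_cycle_def)
qed

section \<open>Hypermaps of acyclic hypertrees\<close>

lemma hypermap_orbit_of_subset:
  assumes "hypermap H" and "G \<subseteq> {r0 H, r1 H, r2 H}" and "x \<in> blades H"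
  shows "orbit_of G x \<subseteq> blades H"
proof (rule orbit_of_subset[OF assms(3)])
  have inv: "fpf_involution (blades H) (r0 H)" "fpf_involution (blades H) (r1 H)"
    "fpf_involution (blades H) (r2 H)" using assms(1) by (simp_all add: hypermap_def)
  have invG: "fpf_involution (blades H) g" if "g \<in> G" for g
  proof -
    have "g = r0 H \<or> g = r1 H \<or> g = r2 H" using assms(2) that by blast
    then show ?thesis using inv by (elim disjE) simp_all
  qed
  show "\<forall>z\<in>blades H. \<forall>g\<in>G. g z \<in> blades H"
  proof (intro ballI)
    fix z g assume "z \<in> blades H" and "g \<in> G"
    then show "g z \<in> blades H" using fpf_involutionD(1)[OF invG] by blast
  qed
qed

lemma hypermap_common_blades:
  assumes H: "hypermap H" and v: "v \<in> hm_vertices H" and e: "e \<in> hm_hyperedges H"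
    and sub: "{x, y, z} \<subseteq> v \<inter> e"
  shows "x = y \<or> x = z \<or> y = z"
proof -
  obtain w where w: "w \<in> blades H" "v = orbit_of {r1 H, r2 H} w" using v by (auto simp: hm_vertices_def)
  have "v \<subseteq> blades H" using hypermap_orbit_of_subset[OF H _ w(1)] w(2) by simp
  then have "finite (v \<inter> e)" using H finite_subset by (auto simp: hypermap_def)
  then have "card {x, y, z} \<le> card (v \<inter> e)" using sub by (rule card_mono)
  moreover have "card (v \<inter> e) \<le> 2" using H v e by (simp add: hypermap_def)
  ultimately show ?thesis by (auto simp: card_insert_if split: if_splits)
qed

lemma hypermap_vertex_step_leaves_hyperedge:
  assumes H: "hypermap H" and e: "e \<in> hm_hyperedges H" and y: "y \<in> e" "y \<in> blades H"
    and no_leaf: "r1 H y \<noteq> r2 H y"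
  shows "r1 H y \<notin> e"
proof
  assume "r1 H y \<in> e"
  moreover have "r2 H y \<in> e" using e y(1) orbit_of_stepI[of y "{r0 H, r2 H}"]
    by (auto simp: hm_hyperedges_def)
  moreover have "{y, r2 H y, r1 H y} \<subseteq> orbit_of {r1 H, r2 H} y"
    using orbit_of_stepI[OF orbit_of_self, of _ "{r1 H, r2 H}" y] by auto
  moreover have "orbit_of {r1 H, r2 H} y \<in> hm_vertices H" using y(2) by (simp add: hm_vertices_def)
  moreover have "fpf_involution (blades H) (r1 H)" "fpf_involution (blades H) (r2 H)"
    using H by (simp_all add: hypermap_def)
  then have "y \<noteq> r2 H y" "y \<noteq> r1 H y" using fpf_involutionD(3) y(2) by metis+
  ultimately show False using hypermap_common_blades[OF H _ e] y(1) no_leaf by blast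
qed

lemma hypermap_hyperedge_step_leaves_vertex:
  assumes H: "hypermap H" and v: "v \<in> hm_vertices H" and y: "y \<in> v" "y \<in> blades H"
    and no_leaf: "r0 H y \<noteq> r2 H y"
  shows "r0 H y \<notin> v"
proof
  assume "r0 H y \<in> v"
  moreover have "r2 H y \<in> v" using v y(1) orbit_of_stepI[of y "{r1 H, r2 H}"]
    by (auto simp: hm_vertices_def)
  moreover have "{y, r2 H y, r0 H y} \<subseteq> orbit_of {r0 H, r2 H} y"
    using orbit_of_stepI[OF orbit_of_self, of _ "{r0 H, r2 H}" y] by auto
  moreover have "orbit_of {r0 H, r2 H} y \<in> hm_hyperedges H" using y(2) by (simp add: hm_hyperedges_def)
  moreover have "fpf_involution (blades H) (r0 H)" "fpf_involution (blades H) (r2 H)"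
    using H by (simp_all add: hypermap_def)
  then have "y \<noteq> r2 H y" "y \<noteq> r0 H y" using fpf_involutionD(3) y(2) by metis+
  ultimately show False using hypermap_common_blades[OF H v] y(1) no_leaf by blast
qed

lemma hypermap_leaf_exists:
  assumes H: "hypermap H" and ne: "blades H \<noteq> {}"
    and acyclic: "\<not> hg_has_cycle (hm_vertices H) (hm_hyperedges H) hm_inc"
  shows "\<exists>x\<in>blades H. r1 H x = r2 H x \<or> r0 H x = r2 H x"
proof (rule ccontr)
  assume "\<not> ?thesis"
  then have no_leaf: "r1 H x \<noteq> r2 H x" "r0 H x \<noteq> r2 H x" if "x \<in> blades H" for x
    using that by auto
  obtain y0 where y0: "y0 \<in> blades H" using ne by auto
  have inv: "fpf_involution (blades H) (r0 H)" "fpf_involution (blades H) (r1 H)"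
    using H by (simp_all add: hypermap_def)
  \<comment> \<open>a walk that alternately changes the hyperedge (by r0) and the vertex (by r1)\<close>
  define Y where "Y k = ((r1 H \<circ> r0 H) ^^ k) y0" for k
  have Y: "Y k \<in> blades H" "r0 H (Y k) \<in> blades H" for k
    by (induction k) (use y0 inv[THEN fpf_involutionD(1)] in \<open>simp_all add: Y_def\<close>)
  have YS: "Y (Suc k) = r1 H (r0 H (Y k))" "r1 H (Y (Suc k)) = r0 H (Y k)" for k
    using fpf_involutionD(2)[OF inv(2) Y(2)] by (simp_all add: Y_def)
  define VV where "VV k = orbit_of {r1 H, r2 H} (Y k)" for k
  define EE where "EE k = orbit_of {r0 H, r2 H} (Y k)" for k
  have VV: "VV k \<in> hm_vertices H" and EE: "EE k \<in> hm_hyperedges H" for k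
    using Y by (simp_all add: VV_def EE_def hm_vertices_def hm_hyperedges_def)
  have mem: "Y k \<in> VV k" "Y k \<in> EE k" "r0 H (Y k) \<in> EE k" "r0 H (Y k) \<in> VV (Suc k)"
    "Y (Suc k) \<in> EE (Suc k)" for k
  proof -
    show "Y k \<in> VV k" "Y k \<in> EE k" "Y (Suc k) \<in> EE (Suc k)" by (simp_all add: VV_def EE_def)
    show "r0 H (Y k) \<in> EE k" unfolding EE_def by (rule orbit_of_stepI[OF orbit_of_self]) simp
    show "r0 H (Y k) \<in> VV (Suc k)"
      unfolding VV_def YS(2)[symmetric] by (rule orbit_of_stepI[OF orbit_of_self]) simp
  qed
  have "hg_has_cycle (hm_vertices H) (hm_hyperedges H) hm_inc"
  proof (rule hg_has_cycle_of_walk[OF _ VV EE])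
    show "finite (hm_vertices H)" using H by (simp add: hypermap_def hm_vertices_def)
    show "hm_inc (VV k) (EE k) \<and> hm_inc (VV (Suc k)) (EE k)" for k
      using mem unfolding hm_inc_def by blast
    show "VV k \<noteq> VV (Suc k)" for k
      using hypermap_hyperedge_step_leaves_vertex[OF H VV mem(1) Y(1) no_leaf(2)[OF Y(1)]] mem(4)
      by metis
    show "EE k \<noteq> EE (Suc k)" for k
      using hypermap_vertex_step_leaves_hyperedge[OF H EE mem(3) Y(2) no_leaf(1)[OF Y(2)]] mem(5) YS(1)
      by metis
  qed
  with acyclic show False ..
qed

definition connected_blades :: "'b hypermap \<Rightarrow> bool" where
  "connected_blades H \<longleftrightarrow> (\<forall>x\<in>blades H. orbit_of {r0 H, r1 H, r2 H} x = blades H)"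

lemma hypermap_same_suborbit:
  assumes H: "hypermap H" and G: "G \<subseteq> {r0 H, r1 H, r2 H}" and x: "x \<in> blades H"
    and pq: "p \<in> orbit_of G x" "q \<in> orbit_of G x"
  shows "q \<in> orbit_of {r0 H, r1 H, r2 H} p"
proof -
  have rev: "reversible_on (blades H) {r0 H, r1 H, r2 H}"
    using H by (simp add: hypermap_def reversible_on_fpf_involutions)
  have "p \<in> orbit_of {r0 H, r1 H, r2 H} x" "q \<in> orbit_of {r0 H, r1 H, r2 H} x"
    using orbit_of_mono[OF G] pq by blast+
  then show ?thesis using orbit_of_eq[OF rev x] by blast
qed

lemma connected_blades_if_hg_connected:
  assumes H: "hypermap H" and conn: "hg_connected (hm_vertices H) (hm_hyperedges H) hm_inc"
  shows "connected_blades H"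
proof -
  let ?B = "blades H" and ?G = "{r0 H, r1 H, r2 H}"
  let ?R = "{(x, y). x \<in> hm_vertices H \<and> y \<in> hm_vertices H
    \<and> (\<exists>e\<in>hm_hyperedges H. hm_inc x e \<and> hm_inc y e)}"
  have V: "q \<in> orbit_of ?G p" if "v \<in> hm_vertices H" "p \<in> v" "q \<in> v" for v p q
    using that hypermap_same_suborbit[OF H, of "{r1 H, r2 H}"] by (auto simp: hm_vertices_def)
  have E: "q \<in> orbit_of ?G p" if "e \<in> hm_hyperedges H" "p \<in> e" "q \<in> e" for e p q
    using that hypermap_same_suborbit[OF H, of "{r0 H, r2 H}"] by (auto simp: hm_hyperedges_def)
  have walk: "\<forall>p\<in>v. \<forall>q\<in>w. q \<in> orbit_of ?G p" if "(v, w) \<in> ?R\<^sup>*" "v \<in> hm_vertices H" for v w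
    using that
  proof (induction rule: rtrancl_induct)
    case base
    then show ?case using V by blast
  next
    case (step w u)
    then obtain e m n where en: "e \<in> hm_hyperedges H" "m \<in> w" "m \<in> e" "n \<in> u" "n \<in> e"
      and u: "u \<in> hm_vertices H"
      unfolding hm_inc_def by blast
    show ?case
    proof (intro ballI)
      fix p q assume p: "p \<in> v" and q: "q \<in> u"
      have "m \<in> orbit_of ?G p" using step.IH step.prems p en(2) by blast
      moreover have "n \<in> orbit_of ?G m" using E[OF en(1,3,5)] .
      moreover have "q \<in> orbit_of ?G n" using V[OF u en(4) q] .
      ultimately show "q \<in> orbit_of ?G p" by (blast intro: orbit_of_trans)
    qed
  qed
  show ?thesis unfolding connected_blades_def
  proof (intro ballI equalityI subsetI)
    fix x y assume x: "x \<in> ?B" and y: "y \<in> ?B"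
    let ?vx = "orbit_of {r1 H, r2 H} x" and ?vy = "orbit_of {r1 H, r2 H} y"
    have "(?vx, ?vy) \<in> ?R\<^sup>*" using conn x y unfolding hg_connected_def hm_vertices_def by blast
    then show "y \<in> orbit_of ?G x" using walk x by (auto simp: hm_vertices_def)
  next
    fix x y assume "x \<in> ?B" and "y \<in> orbit_of ?G x"
    then show "y \<in> ?B" using hypermap_orbit_of_subset[OF H] by blast
  qed
qed

lemma connected_blades_card_le_2:
  assumes H: "hypermap H" and conn: "connected_blades H" and b: "b \<in> blades H"
    and loop: "r0 H b = r2 H b" "r1 H b = r2 H b"
  shows "card (blades H) \<le> 2"
proof -
  have inv: "fpf_involution (blades H) (r0 H)" "fpf_involution (blades H) (r1 H)"
    "fpf_involution (blades H) (r2 H)" using H by (simp_all add: hypermap_def)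
  have "r0 H (r2 H b) = b" "r1 H (r2 H b) = b" "r2 H (r2 H b) = b"
    using loop fpf_involutionD(2)[OF inv(1) b] fpf_involutionD(2)[OF inv(2) b]
      fpf_involutionD(2)[OF inv(3) b] by simp_all
  then have "orbit_of {r0 H, r1 H, r2 H} b \<subseteq> {b, r2 H b}"
    using loop by (intro orbit_of_subset) auto
  then have "blades H \<subseteq> {b, r2 H b}" using conn b by (simp add: connected_blades_def)
  then have "card (blades H) \<le> card {b, r2 H b}" by (rule card_mono[rotated]) simp
  also have "\<dots> \<le> 2" by (simp add: card_insert_if)
  finally show ?thesis .
qed

lemma hypermap_reduct:
  assumes H: "hypermap H" and sub: "blades H' \<subseteq> blades H"
    and inv: "fpf_involution (blades H') (r0 H')" "fpf_involution (blades H') (r1 H')"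
      "fpf_involution (blades H') (r2 H')"
    and V: "\<forall>x\<in>blades H'. orbit_of {r1 H', r2 H'} x = orbit_of {r1 H, r2 H} x \<inter> blades H'"
    and E: "\<forall>x\<in>blades H'. orbit_of {r0 H', r2 H'} x = orbit_of {r0 H, r2 H} x \<inter> blades H'"
  shows "hypermap H'"
proof -
  have "card (v \<inter> e) \<le> 2" if ve: "v \<in> hm_vertices H'" "e \<in> hm_hyperedges H'" for v e
  proof -
    obtain x y where xy: "x \<in> blades H'" "y \<in> blades H'"
      "v = orbit_of {r1 H', r2 H'} x" "e = orbit_of {r0 H', r2 H'} y"
      using ve by (auto simp: hm_vertices_def hm_hyperedges_def)
    let ?v = "orbit_of {r1 H, r2 H} x" and ?e = "orbit_of {r0 H, r2 H} y"
    have "?v \<in> hm_vertices H" "?e \<in> hm_hyperedges H"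
      using xy sub by (auto simp: hm_vertices_def hm_hyperedges_def)
    then have "card (?v \<inter> ?e) \<le> 2" using H by (simp add: hypermap_def)
    moreover have "x \<in> blades H" using xy(1) sub by blast
    then have "?v \<subseteq> blades H" using hypermap_orbit_of_subset[OF H] by simp
    then have "finite (?v \<inter> ?e)" using H finite_subset by (auto simp: hypermap_def)
    moreover have "v \<inter> e \<subseteq> ?v \<inter> ?e" using xy V E by auto
    ultimately show ?thesis by (meson card_mono le_trans)
  qed
  then show "hypermap H'" using H sub inv by (auto simp: hypermap_def intro: finite_subset)
qed

lemma hypermap_reduct_acyclic:
  fixes H H' :: "'b hypermap"
  assumes H: "hypermap H" and sub: "blades H' \<subseteq> blades H"
    and V: "\<forall>x\<in>blades H'. orbit_of {r1 H', r2 H'} x = orbit_of {r1 H, r2 H} x \<inter> blades H'"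
    and E: "\<forall>x\<in>blades H'. orbit_of {r0 H', r2 H'} x = orbit_of {r0 H, r2 H} x \<inter> blades H'"
    and acyclic: "\<not> hg_has_cycle (hm_vertices H) (hm_hyperedges H) hm_inc"
  shows "\<not> hg_has_cycle (hm_vertices H') (hm_hyperedges H') hm_inc"
proof
  have revV: "reversible_on (blades H) {r1 H, r2 H}" and revE: "reversible_on (blades H) {r0 H, r2 H}"
    using H by (simp_all add: hypermap_def reversible_on_fpf_involutions)
  \<comment> \<open>each vertex and hyperedge of H' lies in a unique one of H\<close>
  define f where "f v = orbit_of {r1 H, r2 H} (SOME y. y \<in> v)" for v :: "'b set"
  define g where "g e = orbit_of {r0 H, r2 H} (SOME y. y \<in> e)" for e :: "'b set"
  have fx: "f (orbit_of {r1 H', r2 H'} x) = orbit_of {r1 H, r2 H} x" if x: "x \<in> blades H'" for x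
  proof -
    have "orbit_of {r1 H', r2 H'} x \<subseteq> orbit_of {r1 H, r2 H} x" using V x by auto
    then show ?thesis unfolding f_def using orbit_of_lift[OF revV] x sub by blast
  qed
  have gx: "g (orbit_of {r0 H', r2 H'} x) = orbit_of {r0 H, r2 H} x" if x: "x \<in> blades H'" for x
  proof -
    have "orbit_of {r0 H', r2 H'} x \<subseteq> orbit_of {r0 H, r2 H} x" using E x by auto
    then show ?thesis unfolding g_def using orbit_of_lift[OF revE] x sub by blast
  qed
  assume "hg_has_cycle (hm_vertices H') (hm_hyperedges H') hm_inc"
  then have "hg_has_cycle (hm_vertices H) (hm_hyperedges H) hm_inc"
  proof (rule hg_has_cycle_embed[where f=f and g=g])
    show "inj_on f (hm_vertices H')" "inj_on g (hm_hyperedges H')"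
      using fx gx V E by (auto simp: hm_vertices_def hm_hyperedges_def inj_on_def)
    show "f ` hm_vertices H' \<subseteq> hm_vertices H" "g ` hm_hyperedges H' \<subseteq> hm_hyperedges H"
      using fx gx sub by (auto simp: hm_vertices_def hm_hyperedges_def)
    show "\<forall>v\<in>hm_vertices H'. \<forall>e\<in>hm_hyperedges H'. hm_inc v e \<longrightarrow> hm_inc (f v) (g e)"
      using fx gx V E by (auto simp: hm_vertices_def hm_hyperedges_def hm_inc_def)
  qed
  with acyclic show False ..
qed

lemma connected_blades_reduct:
  assumes "connected_blades H" and "blades H' \<subseteq> blades H"
    and "\<forall>x\<in>blades H'. orbit_of {r0 H', r1 H', r2 H'} x = orbit_of {r0 H, r1 H, r2 H} x \<inter> blades H'"
  shows "connected_blades H'"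
  using assms by (auto simp: connected_blades_def)

section \<open>Partial duals\<close>

(* For U the blades of the hyperedges in A, pd_tau s0 s1 s2 U is psi|_A o tau and pd_psi s0 s2 U
   is the hyperedge permutation of H^A, written with s0 s1 s2 = r0 r1 r2. *)
definition pd_tau :: "('b \<Rightarrow> 'b) \<Rightarrow> ('b \<Rightarrow> 'b) \<Rightarrow> ('b \<Rightarrow> 'b) \<Rightarrow> 'b set \<Rightarrow> 'b \<Rightarrow> 'b" where
  "pd_tau s0 s1 s2 U x = (if s1 (s2 x) \<in> U then s2 (s0 (s1 (s2 x))) else s1 (s2 x))"

definition pd_psi :: "('b \<Rightarrow> 'b) \<Rightarrow> ('b \<Rightarrow> 'b) \<Rightarrow> 'b set \<Rightarrow> 'b \<Rightarrow> 'b" where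
  "pd_psi s0 s2 U x = (if x \<in> U then s0 (s2 x) else s2 (s0 x))"

lemma pd_tau_bij:
  assumes "fpf_involution B s0" "fpf_involution B s1" "fpf_involution B s2"
    and "\<forall>x\<in>U. s0 x \<in> U \<and> s2 x \<in> U"
  shows "bij_betw (pd_tau s0 s1 s2 U) B B"
proof -
  let ?F0 = "\<lambda>x. if x \<in> U then s0 x else x" and ?F2 = "\<lambda>x. if x \<in> U then s2 x else x"
  have "pd_tau s0 s1 s2 U = ?F2 \<circ> ?F0 \<circ> s1 \<circ> s2"
    using assms(4) by (auto simp: pd_tau_def)
  moreover have "bij_betw s1 B B" "bij_betw s2 B B"
    using assms(2,3) fpf_involutionD by (auto intro!: bij_betw_involution)
  moreover have "bij_betw ?F0 B B" "bij_betw ?F2 B B"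
    using assms(4) by (auto intro!: bij_betw_if_involution assms(1,3))
  ultimately show ?thesis
    using bij_betw_trans[of s2 B B, OF _ bij_betw_trans[of s1 B B, OF _ bij_betw_trans[of ?F0]]]
    by simp
qed

lemma pd_psi_bij:
  assumes "fpf_involution B s0" "fpf_involution B s2"
    and "\<forall>x\<in>U. s0 x \<in> U \<and> s2 x \<in> U"
  shows "bij_betw (pd_psi s0 s2 U) B B"
proof -
  have iff: "s0 x \<in> U \<longleftrightarrow> x \<in> U" "s2 x \<in> U \<longleftrightarrow> x \<in> U" if "x \<in> B" for x
    using fpf_involution_mem_iff assms that by metis+
  let ?F = "\<lambda>x. if x \<in> U then s0 x else s2 x" and ?G = "\<lambda>x. if x \<in> U then s2 x else s0 x"
  have "bij_betw ?F B B" "bij_betw ?G B B"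
    using iff assms(1,2)[THEN fpf_involutionD(1)] assms(1,2)[THEN fpf_involutionD(2)]
    by (auto intro!: bij_betw_involution)
  then have "bij_betw (?F \<circ> ?G) B B" by (rule bij_betw_trans[rotated])
  moreover have "bij_betw (?F \<circ> ?G) B B = bij_betw (pd_psi s0 s2 U) B B"
  proof (rule bij_betw_cong)
    fix x assume "x \<in> B"
    then show "(?F \<circ> ?G) x = pd_psi s0 s2 U x" using iff[of x] by (simp add: pd_psi_def)
  qed
  ultimately show ?thesis by simp
qed

lemma pd_psi_pd_tau:
  assumes "fpf_involution B s0" "fpf_involution B s1" "fpf_involution B s2"
    and U: "\<forall>x\<in>U. s0 x \<in> U \<and> s2 x \<in> U" and x: "x \<in> B"
  shows "pd_psi s0 s2 U (pd_tau s0 s1 s2 U x) = pd_tau s0 s1 s2 (B - U) x"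
proof -
  let ?y = "s1 (s2 x)"
  have y: "?y \<in> B" using assms(2,3) x by (simp add: fpf_involutionD(1))
  then show ?thesis
    using U fpf_involutionD(1,2)[OF assms(1) y] fpf_involutionD(2)[OF assms(3) fpf_involutionD(1)[OF assms(1) y]]
    by (auto simp: pd_tau_def pd_psi_def)
qed

lemma gen_rel_pd_moves:
  assumes inv: "fpf_involution B s0" "fpf_involution B s1" "fpf_involution B s2"
    and U: "\<forall>x\<in>U. s0 x \<in> U \<and> s2 x \<in> U" and z: "z \<in> B" and g: "g \<in> {s0, s1, s2}"
  shows "(z, g z) \<in> (gen_rel {pd_tau s0 s1 s2 U, pd_psi s0 s2 U, s2})\<^sup>*"
proof -
  let ?T = "pd_tau s0 s1 s2 U" and ?P = "pd_psi s0 s2 U"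
  let ?G = "{?T, ?P, s2}"
  note r0 = fpf_involutionD[OF inv(1)] and r1 = fpf_involutionD[OF inv(2)]
    and r2 = fpf_involutionD[OF inv(3)]
  have path2: "(z, f2 (f1 z)) \<in> (gen_rel ?G)\<^sup>*" if "f1 \<in> ?G" "f2 \<in> ?G" for f1 f2
    using gen_rel_rtrancl_into[OF gen_rel_rtrancl_step that(2)] that(1) .
  have path3: "(z, f3 (f2 (f1 z))) \<in> (gen_rel ?G)\<^sup>*" if "f1 \<in> ?G" "f2 \<in> ?G" "f3 \<in> ?G" for f1 f2 f3
    using gen_rel_rtrancl_into[OF path2 that(3)] that(1,2) .
  have "(z, s0 z) \<in> (gen_rel ?G)\<^sup>*"
  proof (cases "z \<in> U")
    case True
    then have "?P (s2 z) = s0 z" using U r2(2)[OF z] by (simp add: pd_psi_def)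
    then show ?thesis using path2[of s2 ?P] by simp
  next
    case False
    then have "s2 (?P z) = s0 z" using r0(1)[OF z] r2(2) by (simp add: pd_psi_def)
    then show ?thesis using path2[of ?P s2] by simp
  qed
  moreover have "(z, s1 z) \<in> (gen_rel ?G)\<^sup>*"
  proof (cases "s1 z \<in> U")
    case False
    then have "?T (s2 z) = s1 z" using r2(2)[OF z] by (simp add: pd_tau_def)
    then show ?thesis using path2[of s2 ?T] by simp
  next
    case True
    then have "?P (?T (s2 z)) = s1 z"
      using U r2(2)[OF z] r2(2)[OF r0(1)[OF r1(1)[OF z]]] r0(2)[OF r1(1)[OF z]]
      by (simp add: pd_tau_def pd_psi_def)
    then show ?thesis using path3[of s2 ?T ?P] by simp
  qed
  moreover have "(z, s2 z) \<in> (gen_rel ?G)\<^sup>*" by (rule gen_rel_rtrancl_step) simp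
  ultimately show ?thesis using g by blast
qed

lemma num_orbits_pd_eq_1:
  assumes H: "hypermap H" and conn: "connected_blades H" and ne: "blades H \<noteq> {}"
    and U: "\<forall>x\<in>U. r0 H x \<in> U \<and> r2 H x \<in> U"
  shows "num_orbits (blades H) {pd_tau (r0 H) (r1 H) (r2 H) U, pd_psi (r0 H) (r2 H) U, r2 H} = 1"
proof -
  let ?B = "blades H" and ?G = "{pd_tau (r0 H) (r1 H) (r2 H) U, pd_psi (r0 H) (r2 H) U, r2 H}"
  have inv: "fpf_involution ?B (r0 H)" "fpf_involution ?B (r1 H)" "fpf_involution ?B (r2 H)"
    using H by (simp_all add: hypermap_def)
  have cl: "\<forall>z\<in>?B. \<forall>g\<in>?G. g z \<in> ?B"
    using bij_betw_apply[OF pd_tau_bij[OF inv U]] bij_betw_apply[OF pd_psi_bij[OF inv(1,3) U]]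
      fpf_involutionD(1)[OF inv(3)] by auto
  have moves: "\<forall>z\<in>?B. \<forall>g\<in>{r0 H, r1 H, r2 H}. g z \<in> ?B \<and> (z, g z) \<in> (gen_rel ?G)\<^sup>*"
    using gen_rel_pd_moves[OF inv U] inv[THEN fpf_involutionD(1)] by blast
  have "orbit_of ?G x = ?B" if x: "x \<in> ?B" for x
  proof
    show "orbit_of ?G x \<subseteq> ?B" using orbit_of_subset[OF x cl] .
    show "?B \<subseteq> orbit_of ?G x"
    proof
      fix y assume "y \<in> ?B"
      then have "y \<in> orbit_of {r0 H, r1 H, r2 H} x" using conn x by (simp add: connected_blades_def)
      then have "(x, y) \<in> (gen_rel {r0 H, r1 H, r2 H})\<^sup>*" by (simp add: orbit_of_def)
      then show "y \<in> orbit_of ?G x"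
        using gen_rel_rtrancl_map[where h="\<lambda>z. z", OF _ x moves] by (simp add: orbit_of_def)
    qed
  qed
  then have "orbit_of ?G ` ?B = {?B}" using ne by auto
  then show ?thesis by (simp add: num_orbits_def)
qed

lemma hyperedges_Union_closed:
  assumes H: "hypermap H" and A: "A \<subseteq> hm_hyperedges H"
  shows "\<Union>A \<subseteq> blades H" and "\<forall>y\<in>\<Union>A. r0 H y \<in> \<Union>A \<and> r2 H y \<in> \<Union>A"
proof -
  have "orbit_of {r0 H, r2 H} x \<subseteq> blades H" if "x \<in> blades H" for x
    using hypermap_orbit_of_subset[OF H _ that] by simp
  with A show "\<Union>A \<subseteq> blades H" unfolding hm_hyperedges_def by blast
  show "\<forall>y\<in>\<Union>A. r0 H y \<in> \<Union>A \<and> r2 H y \<in> \<Union>A"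
  proof
    fix y assume "y \<in> \<Union>A"
    then obtain X where X: "X \<in> A" "y \<in> X" by blast
    then obtain x where "X = orbit_of {r0 H, r2 H} x" using A by (auto simp: hm_hyperedges_def)
    then have "r0 H y \<in> X" "r2 H y \<in> X" using orbit_of_stepI[of y _ x] X(2) by simp_all
    then show "r0 H y \<in> \<Union>A \<and> r2 H y \<in> \<Union>A" using X(1) by blast
  qed
qed

lemma pd_euler_genus_eq:
  assumes H: "hypermap H" and A: "A \<subseteq> hm_hyperedges H"
  defines "U \<equiv> \<Union>A"
  shows "pd_euler_genus H A
    = 2 * int (num_orbits (blades H) {pd_tau (r0 H) (r1 H) (r2 H) U, pd_psi (r0 H) (r2 H) U, r2 H})
      - (int (num_cycles (blades H) (pd_tau (r0 H) (r1 H) (r2 H) U)) div 2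
         + int (num_cycles (blades H) (pd_psi (r0 H) (r2 H) U)) div 2
         + int (num_cycles (blades H) (pd_tau (r0 H) (r1 H) (r2 H) (blades H - U))) div 2
         - int (card (blades H)) div 2)"
proof -
  let ?B = "blades H"
  have fin: "finite ?B" and inv: "fpf_involution ?B (r0 H)" "fpf_involution ?B (r1 H)"
    "fpf_involution ?B (r2 H)" using H by (simp_all add: hypermap_def)
  have U: "\<forall>x\<in>U. r0 H x \<in> U \<and> r2 H x \<in> U" using hyperedges_Union_closed[OF H A] by (simp add: U_def)
  then have "\<forall>x\<in>U. r0 H x \<in> U" "\<forall>x\<in>U. r2 H x \<in> U" by simp_all
  then have U': "\<forall>x\<in>?B - U. r0 H x \<in> ?B - U \<and> r2 H x \<in> ?B - U"
    using fpf_involution_Diff_closed[OF inv(1), of U] fpf_involution_Diff_closed[OF inv(3), of U] by simp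
  have "\<forall>x\<in>?B. (pd_psi (r0 H) (r2 H) U \<circ> pd_tau (r0 H) (r1 H) (r2 H) U) x
      = pd_tau (r0 H) (r1 H) (r2 H) (?B - U) x"
    using pd_psi_pd_tau[OF inv U] by simp
  then have "num_cycles ?B (pd_psi (r0 H) (r2 H) U \<circ> pd_tau (r0 H) (r1 H) (r2 H) U)
      = num_cycles ?B (pd_tau (r0 H) (r1 H) (r2 H) (?B - U))"
    by (rule num_cycles_cong[OF fin pd_tau_bij[OF inv U']])
  moreover have "psi_restr H A \<circ> hm_tau H = pd_tau (r0 H) (r1 H) (r2 H) U"
    "psi_dual H A = pd_psi (r0 H) (r2 H) U"
    by (auto simp: U_def psi_restr_def hm_tau_def hm_psi_def pd_tau_def psi_dual_def pd_psi_def)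
  ultimately show ?thesis by (simp add: pd_euler_genus_def triple_eg_def triple_chi_def)
qed

(* These counts are twice the numbers of vertices, hyperedges and faces of H^A, the faces being
   the cycles of pd_psi U o pd_tau U = pd_tau (B - U); the sum condition says Euler characteristic 2. *)
definition pd_plane_counts :: "'b hypermap \<Rightarrow> 'b set \<Rightarrow> bool" where
  "pd_plane_counts H U \<longleftrightarrow>
     even (num_cycles (blades H) (pd_tau (r0 H) (r1 H) (r2 H) U))
   \<and> even (num_cycles (blades H) (pd_psi (r0 H) (r2 H) U))
   \<and> even (num_cycles (blades H) (pd_tau (r0 H) (r1 H) (r2 H) (blades H - U)))
   \<and> num_cycles (blades H) (pd_tau (r0 H) (r1 H) (r2 H) U)
       + num_cycles (blades H) (pd_psi (r0 H) (r2 H) U)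
       + num_cycles (blades H) (pd_tau (r0 H) (r1 H) (r2 H) (blades H - U))
     = card (blades H) + 4"

lemma pd_plane_counts_two_blades:
  assumes H: "hypermap H" and x: "x \<in> blades H" and card: "card (blades H) \<le> 2"
  shows "pd_plane_counts H U"
proof -
  let ?B = "blades H"
  have fin: "finite ?B" and inv: "fpf_involution ?B (r0 H)" "fpf_involution ?B (r1 H)" "fpf_involution ?B (r2 H)"
    using H by (simp_all add: hypermap_def)
  have sub: "{x, r2 H x} \<subseteq> ?B" using x fpf_involutionD(1)[OF inv(3) x] by simp
  have two: "card {x, r2 H x} = 2" using fpf_involutionD(3)[OF inv(3) x] by simp
  have B: "?B = {x, r2 H x}"
    by (rule card_subset_eq[OF fin sub, symmetric]) (use card card_mono[OF fin sub] two in linarith)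
  have other: "g y = r2 H y" if g: "fpf_involution ?B g" and y: "y \<in> ?B" for g y
  proof -
    have "g y \<in> {x, r2 H x}" using fpf_involutionD(1)[OF g y] by (simp only: B)
    moreover have "g y \<noteq> y" using fpf_involutionD(3)[OF g y] .
    moreover have "r2 H (r2 H x) = x" using fpf_involutionD(2)[OF inv(3) x] .
    moreover have "y = x \<or> y = r2 H x" using y B by blast
    ultimately show ?thesis by auto
  qed
  have "\<forall>y\<in>?B. pd_tau (r0 H) (r1 H) (r2 H) V y = y" "\<forall>y\<in>?B. pd_psi (r0 H) (r2 H) V y = y" for V
    using other[OF inv(1)] other[OF inv(2)] fpf_involutionD[OF inv(3)]
    by (auto simp: pd_tau_def pd_psi_def)
  then have "num_cycles ?B (pd_tau (r0 H) (r1 H) (r2 H) V) = 2" "num_cycles ?B (pd_psi (r0 H) (r2 H) V) = 2"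
    for V using num_cycles_id[of ?B "pd_tau (r0 H) (r1 H) (r2 H) V"]
      num_cycles_id[of ?B "pd_psi (r0 H) (r2 H) V"] two B by simp_all
  then show ?thesis by (simp add: pd_plane_counts_def two B)
qed

section \<open>Removing a leaf incidence\<close>

(* {b, c} is an incidence whose q-r orbit is {b, c} alone: a vertex of degree one when
   (p, q) = (r0, r1), a hyperedge of size one when (p, q) = (r1, r0). Deleting it and
   regluing p across the gap gives the reduced map on B'. *)
locale leaf_removal =
  fixes B :: "'b set" and p q r :: "'b \<Rightarrow> 'b" and b :: 'b
  assumes finite: "finite B"
    and p: "fpf_involution B p" and q: "fpf_involution B q" and r: "fpf_involution B r"
    and b: "b \<in> B" and leaf: "q b = r b" and not_loop: "p b \<noteq> r b"
begin

abbreviation "c \<equiv> r b"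
abbreviation "a \<equiv> p b"
abbreviation "d \<equiv> p c"
abbreviation "B' \<equiv> B - {b, c}"
abbreviation "p' \<equiv> p(a := d, d := a)"

lemmas closed [simp] = fpf_involutionD(1)[OF p] fpf_involutionD(1)[OF q] fpf_involutionD(1)[OF r]
lemmas involutive [simp] = fpf_involutionD(2)[OF p] fpf_involutionD(2)[OF q] fpf_involutionD(2)[OF r]

lemma mem [simp]: "b \<in> B" "c \<in> B" "a \<in> B" "d \<in> B"
  using b by simp_all

lemma leaf_simps [simp]: "q b = c" "q c = b"
  using leaf involutive(2)[OF b] by simp_all

lemma distinct [simp]: "b \<noteq> c" "a \<noteq> b" "a \<noteq> c" "d \<noteq> b" "d \<noteq> c" "a \<noteq> d"
proof -
  show bc: "b \<noteq> c" using fpf_involutionD(3)[OF r b] by simp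
  show "a \<noteq> b" using fpf_involutionD(3)[OF p b] .
  show "a \<noteq> c" using not_loop .
  show "d \<noteq> c" using fpf_involutionD(3)[OF p mem(2)] .
  show "d \<noteq> b"
  proof
    assume "d = b"
    then have "p d = a" by simp
    then show False using not_loop involutive(1)[OF mem(2)] by simp
  qed
  show "a \<noteq> d" using bc involutive(1)[OF b] involutive(1)[OF mem(2)] by metis
qed

lemma distinct' [simp]: "c \<noteq> b" "b \<noteq> a" "c \<noteq> a" "b \<noteq> d" "c \<noteq> d" "d \<noteq> a"
  using distinct by (simp_all add: eq_commute)

lemma eq_iff [simp]:
  assumes "x \<in> B"
  shows "p x = b \<longleftrightarrow> x = a" "p x = c \<longleftrightarrow> x = d" "p x = a \<longleftrightarrow> x = b" "p x = d \<longleftrightarrow> x = c"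
    "q x = b \<longleftrightarrow> x = c" "q x = c \<longleftrightarrow> x = b"
    "r x = b \<longleftrightarrow> x = c" "r x = c \<longleftrightarrow> x = b"
  using fpf_involution_eq_iff[OF p assms] fpf_involution_eq_iff[OF q assms]
    fpf_involution_eq_iff[OF r assms] by simp_all

lemma r_neighbours [simp]: "r a \<noteq> b" "r a \<noteq> c" "r d \<noteq> b" "r d \<noteq> c"
  "b \<noteq> r a" "c \<noteq> r a" "b \<noteq> r d" "c \<noteq> r d"
  using eq_iff(7,8)[OF mem(3)] eq_iff(7,8)[OF mem(4)] distinct by metis+

lemma closed_mem_iff:
  assumes "\<forall>x\<in>U. g x \<in> U" and "g \<in> {p, q, r}" and "x \<in> B"
  shows "g x \<in> U \<longleftrightarrow> x \<in> U"
  using fpf_involution_mem_iff[OF _ assms(1,3)] assms(2) p q r by blast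

lemma card_B: "card B = card B' + 2"
proof -
  have "card {b, c} \<le> card B" by (rule card_mono[OF finite]) simp
  then show ?thesis using finite by (simp add: card_Diff_subset)
qed

lemma fpf_involution_B': "fpf_involution B' p'" "fpf_involution B' q" "fpf_involution B' r"
  using fpf_involutionD(3)[OF p] fpf_involutionD(3)[OF q] fpf_involutionD(3)[OF r]
  by (auto simp: fpf_involution_def)

lemma orbit_of_q_r_subset: "x \<in> B' \<Longrightarrow> orbit_of {q, r} x \<subseteq> B'"
  by (rule orbit_of_subset) auto

lemma p'_reachable:
  assumes "r \<in> G"
  shows "(z, p' z) \<in> (gen_rel (insert p G))\<^sup>*"
proof -
  let ?R = "gen_rel (insert p G)"
  have path: "(x, p (r (p x))) \<in> ?R\<^sup>*" for x
  proof -
    have "(x, p x) \<in> ?R\<^sup>*" using gen_rel_rtrancl_step[of p "insert p G" x] by simp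
    then have "(x, r (p x)) \<in> ?R\<^sup>*" using gen_rel_rtrancl_into[of x "p x" _ r] assms by simp
    then show ?thesis using gen_rel_rtrancl_into[of x "r (p x)" _ p] by simp
  qed
  show ?thesis
    using path[of a] path[of d] gen_rel_rtrancl_step[of p "insert p G" z] by auto
qed

abbreviation "retract z \<equiv> if z = b then a else if z = c then d else z"

lemma retract_step:
  assumes G: "r \<in> G" "G \<subseteq> {q, r}" and z: "z \<in> B" and g: "g \<in> insert p G"
  shows "(retract z, retract (g z)) \<in> (gen_rel (insert p' G))\<^sup>*"
proof (cases "g = p")
  case True
  then show ?thesis using z gen_rel_rtrancl_step[of p' "insert p' G" z] by auto
next
  case False
  then have gG: "g \<in> G" using g by simp
  then have g_bc: "g b = c" "g c = b" using G by auto
  consider "z = b" | "z = c" | "z \<noteq> b" "z \<noteq> c" by blast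
  then show ?thesis
  proof cases
    case 1
    then show ?thesis using g_bc gen_rel_rtrancl_step[of p' "insert p' G" a] by simp
  next
    case 2
    then show ?thesis using g_bc gen_rel_rtrancl_step[of p' "insert p' G" d] by simp
  next
    case 3
    have "g = q \<or> g = r" using gG G by auto
    then have "g z \<noteq> b \<and> g z \<noteq> c" using eq_iff[OF z] 3 by (elim disjE) simp_all
    then show ?thesis using 3 gen_rel_rtrancl_step[of g "insert p' G" z] gG by simp
  qed
qed

lemma orbit_of_p':
  assumes G: "r \<in> G" "G \<subseteq> {q, r}" and x: "x \<in> B'"
  shows "orbit_of (insert p' G) x = orbit_of (insert p G) x \<inter> B'"
proof (rule orbit_of_retract[OF x, where h=retract])
  show "\<forall>z\<in>B'. \<forall>g\<in>insert p' G. g z \<in> B' \<and> (z, g z) \<in> (gen_rel (insert p G))\<^sup>*"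
  proof (intro ballI)
    fix z g assume z: "z \<in> B'" and g: "g \<in> insert p' G"
    then have "fpf_involution B' g" using G fpf_involution_B' by auto
    then have "g z \<in> B'" using z by (rule fpf_involutionD(1))
    moreover have "(z, g z) \<in> (gen_rel (insert p G))\<^sup>*"
    proof (cases "g = p'")
      case True
      then show ?thesis using p'_reachable[OF G(1), of z] by simp
    next
      case False
      then show ?thesis using g gen_rel_rtrancl_step[of g "insert p G" z] by simp
    qed
    ultimately show "g z \<in> B' \<and> (z, g z) \<in> (gen_rel (insert p G))\<^sup>*" ..
  qed
  show "\<forall>z\<in>B. \<forall>g\<in>insert p G. g z \<in> B \<and> (retract z, retract (g z)) \<in> (gen_rel (insert p' G))\<^sup>*"
  proof (intro ballI conjI)
    fix z g assume z: "z \<in> B" and g: "g \<in> insert p G"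
    show "g z \<in> B" using g G z by auto
    show "(retract z, retract (g z)) \<in> (gen_rel (insert p' G))\<^sup>*" by (rule retract_step[OF G z g])
  qed
qed auto

lemma vertex_leaf_reduct:
  assumes "hypermap \<lparr>blades = B, r0 = p, r1 = q, r2 = r\<rparr>"
    and "connected_blades \<lparr>blades = B, r0 = p, r1 = q, r2 = r\<rparr>"
    and "\<not> hg_has_cycle (hm_vertices \<lparr>blades = B, r0 = p, r1 = q, r2 = r\<rparr>)
      (hm_hyperedges \<lparr>blades = B, r0 = p, r1 = q, r2 = r\<rparr>) hm_inc"
  shows "hypermap \<lparr>blades = B', r0 = p', r1 = q, r2 = r\<rparr>"
    and "connected_blades \<lparr>blades = B', r0 = p', r1 = q, r2 = r\<rparr>"
    and "\<not> hg_has_cycle (hm_vertices \<lparr>blades = B', r0 = p', r1 = q, r2 = r\<rparr>)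
      (hm_hyperedges \<lparr>blades = B', r0 = p', r1 = q, r2 = r\<rparr>) hm_inc"
proof -
  have V: "\<forall>x\<in>B'. orbit_of {q, r} x = orbit_of {q, r} x \<inter> B'"
    using orbit_of_q_r_subset by blast
  have E: "\<forall>x\<in>B'. orbit_of {p', r} x = orbit_of {p, r} x \<inter> B'"
    using orbit_of_p'[of "{r}"] by simp
  have C: "\<forall>x\<in>B'. orbit_of {p', q, r} x = orbit_of {p, q, r} x \<inter> B'"
    using orbit_of_p'[of "{q, r}"] by simp
  show "hypermap \<lparr>blades = B', r0 = p', r1 = q, r2 = r\<rparr>"
    using hypermap_reduct[OF assms(1)] fpf_involution_B' V E by auto
  show "\<not> hg_has_cycle (hm_vertices \<lparr>blades = B', r0 = p', r1 = q, r2 = r\<rparr>)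
      (hm_hyperedges \<lparr>blades = B', r0 = p', r1 = q, r2 = r\<rparr>) hm_inc"
    using hypermap_reduct_acyclic[OF assms(1) _ _ _ assms(3)] V E by auto
  show "connected_blades \<lparr>blades = B', r0 = p', r1 = q, r2 = r\<rparr>"
    using connected_blades_reduct[OF assms(2)] C by auto
qed

lemma edge_leaf_reduct:
  assumes "hypermap \<lparr>blades = B, r0 = q, r1 = p, r2 = r\<rparr>"
    and "connected_blades \<lparr>blades = B, r0 = q, r1 = p, r2 = r\<rparr>"
    and "\<not> hg_has_cycle (hm_vertices \<lparr>blades = B, r0 = q, r1 = p, r2 = r\<rparr>)
      (hm_hyperedges \<lparr>blades = B, r0 = q, r1 = p, r2 = r\<rparr>) hm_inc"
  shows "hypermap \<lparr>blades = B', r0 = q, r1 = p', r2 = r\<rparr>"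
    and "connected_blades \<lparr>blades = B', r0 = q, r1 = p', r2 = r\<rparr>"
    and "\<not> hg_has_cycle (hm_vertices \<lparr>blades = B', r0 = q, r1 = p', r2 = r\<rparr>)
      (hm_hyperedges \<lparr>blades = B', r0 = q, r1 = p', r2 = r\<rparr>) hm_inc"
proof -
  have V: "\<forall>x\<in>B'. orbit_of {p', r} x = orbit_of {p, r} x \<inter> B'"
    using orbit_of_p'[of "{r}"] by simp
  have E: "\<forall>x\<in>B'. orbit_of {q, r} x = orbit_of {q, r} x \<inter> B'"
    using orbit_of_q_r_subset by blast
  have C: "\<forall>x\<in>B'. orbit_of {q, p', r} x = orbit_of {q, p, r} x \<inter> B'"
    using orbit_of_p'[of "{q, r}"] by (simp add: insert_commute)
  show "hypermap \<lparr>blades = B', r0 = q, r1 = p', r2 = r\<rparr>"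
    using hypermap_reduct[OF assms(1)] fpf_involution_B' V E by auto
  show "\<not> hg_has_cycle (hm_vertices \<lparr>blades = B', r0 = q, r1 = p', r2 = r\<rparr>)
      (hm_hyperedges \<lparr>blades = B', r0 = q, r1 = p', r2 = r\<rparr>) hm_inc"
    using hypermap_reduct_acyclic[OF assms(1) _ _ _ assms(3)] V E by auto
  show "connected_blades \<lparr>blades = B', r0 = q, r1 = p', r2 = r\<rparr>"
    using connected_blades_reduct[OF assms(2)] C by auto
qed

lemma vertex_leaf_subsets:
  assumes U: "U \<subseteq> B" "\<forall>x\<in>U. p x \<in> U \<and> r x \<in> U"
  shows "U - {b, c} \<subseteq> B'" and "\<forall>x\<in>U - {b, c}. p' x \<in> U - {b, c} \<and> r x \<in> U - {b, c}"
    and "\<forall>x\<in>B - U. p x \<in> B - U \<and> r x \<in> B - U"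
proof -
  have Up: "p x \<in> U \<longleftrightarrow> x \<in> U" and Ur: "r x \<in> U \<longleftrightarrow> x \<in> U" if "x \<in> B" for x
    using closed_mem_iff[of U p x] closed_mem_iff[of U r x] U(2) that by auto
  show "U - {b, c} \<subseteq> B'" using U(1) by auto
  have "a \<in> U \<longleftrightarrow> d \<in> U" using Up[of b] Up[of c] Ur[of b] by simp
  then show "\<forall>x\<in>U - {b, c}. p' x \<in> U - {b, c} \<and> r x \<in> U - {b, c}"
    using U by auto
  show "\<forall>x\<in>B - U. p x \<in> B - U \<and> r x \<in> B - U"
  proof -
    have "\<forall>x\<in>U. p x \<in> U" "\<forall>x\<in>U. r x \<in> U" using U(2) by simp_all
    then show ?thesis using fpf_involution_Diff_closed[OF p, of U] fpf_involution_Diff_closed[OF r, of U] by simp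
  qed
qed

lemma edge_leaf_subsets:
  assumes U: "U \<subseteq> B" "\<forall>x\<in>U. q x \<in> U \<and> r x \<in> U"
  shows "U - {b, c} \<subseteq> B'" and "\<forall>x\<in>U - {b, c}. q x \<in> U - {b, c} \<and> r x \<in> U - {b, c}"
    and "\<forall>x\<in>B - U. q x \<in> B - U \<and> r x \<in> B - U"
proof -
  show "U - {b, c} \<subseteq> B'" using U(1) by auto
  show "\<forall>x\<in>U - {b, c}. q x \<in> U - {b, c} \<and> r x \<in> U - {b, c}"
  proof
    fix x assume x: "x \<in> U - {b, c}"
    then have "x \<in> B" using U(1) by auto
    then show "q x \<in> U - {b, c} \<and> r x \<in> U - {b, c}" using x U(2) by simp
  qed
  show "\<forall>x\<in>B - U. q x \<in> B - U \<and> r x \<in> B - U"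
  proof -
    have "\<forall>x\<in>U. q x \<in> U" "\<forall>x\<in>U. r x \<in> U" using U(2) by simp_all
    then show ?thesis using fpf_involution_Diff_closed[OF q, of U] fpf_involution_Diff_closed[OF r, of U] by simp
  qed
qed

lemma num_cycles_pd_tau_vertex_leaf:
  assumes U: "\<forall>x\<in>U. p x \<in> U \<and> r x \<in> U"
  shows "num_cycles B (pd_tau p q r U)
    = num_cycles B' (pd_tau p' q r (U - {b, c})) + (if b \<in> U then 0 else 2)"
proof -
  let ?T = "pd_tau p q r U"
  have Up [simp]: "p x \<in> U \<longleftrightarrow> x \<in> U" and Ur [simp]: "r x \<in> U \<longleftrightarrow> x \<in> U" if "x \<in> B" for x
    using closed_mem_iff[of U p x] closed_mem_iff[of U r x] U that by auto
  have T: "?T b = (if b \<in> U then r a else b)" "?T c = (if b \<in> U then r d else c)"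
    using Ur[of b] by (auto simp: pd_tau_def)
  have "num_cycles B ?T = num_cycles B' (pd_tau p' q r (U - {b, c})) + card {s \<in> {b, c}. ?T s = s}"
  proof (rule num_cycles_skip[OF finite pd_tau_bij[OF p q r U]])
    show "\<forall>s\<in>{b, c}. ?T s = s \<or> ?T s \<notin> {b, c}" using T by auto
    show "\<forall>y\<in>B'. pd_tau p' q r (U - {b, c}) y = (if ?T y \<in> {b, c} then ?T (?T y) else ?T y)"
      using T by (auto simp: pd_tau_def)
  qed simp
  moreover have "{s \<in> {b, c}. ?T s = s} = (if b \<in> U then {} else {b, c})" using T by auto
  ultimately show ?thesis by simp
qed

lemma num_cycles_pd_psi_vertex_leaf:
  assumes U: "\<forall>x\<in>U. p x \<in> U \<and> r x \<in> U"
  shows "num_cycles B (pd_psi p r U) = num_cycles B' (pd_psi p' r (U - {b, c}))"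
proof -
  let ?P = "pd_psi p r U"
  have Up [simp]: "p x \<in> U \<longleftrightarrow> x \<in> U" and Ur [simp]: "r x \<in> U \<longleftrightarrow> x \<in> U" if "x \<in> B" for x
    using closed_mem_iff[of U p x] closed_mem_iff[of U r x] U that by auto
  have P: "?P b = (if b \<in> U then d else r a)" "?P c = (if b \<in> U then a else r d)"
    using Ur[of b] by (auto simp: pd_psi_def)
  have "num_cycles B ?P = num_cycles B' (pd_psi p' r (U - {b, c})) + card {s \<in> {b, c}. ?P s = s}"
  proof (rule num_cycles_skip[OF finite pd_psi_bij[OF p r U]])
    show "\<forall>s\<in>{b, c}. ?P s = s \<or> ?P s \<notin> {b, c}" using P by auto
    have "a \<in> U \<longleftrightarrow> b \<in> U" "d \<in> U \<longleftrightarrow> b \<in> U" using Up[of b] Up[of c] Ur[of b] by simp_all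
    then show "\<forall>y\<in>B'. pd_psi p' r (U - {b, c}) y = (if ?P y \<in> {b, c} then ?P (?P y) else ?P y)"
      using P U by (auto simp: pd_psi_def)
  qed simp
  moreover have "{s \<in> {b, c}. ?P s = s} = {}" using P by (auto split: if_splits)
  ultimately show ?thesis by simp
qed

lemma num_cycles_pd_tau_edge_leaf:
  assumes U: "\<forall>x\<in>U. q x \<in> U \<and> r x \<in> U"
  shows "num_cycles B (pd_tau q p r U) = num_cycles B' (pd_tau q p' r (U - {b, c}))"
proof -
  let ?T = "pd_tau q p r U"
  have Uq [simp]: "q x \<in> U \<longleftrightarrow> x \<in> U" and Ur [simp]: "r x \<in> U \<longleftrightarrow> x \<in> U" if "x \<in> B" for x
    using closed_mem_iff[of U q x] closed_mem_iff[of U r x] U that by auto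
  have T: "?T b \<notin> {b, c}" "?T c \<notin> {b, c}" by (simp_all add: pd_tau_def)
  have "num_cycles B ?T = num_cycles B' (pd_tau q p' r (U - {b, c})) + card {s \<in> {b, c}. ?T s = s}"
  proof (rule num_cycles_skip[OF finite pd_tau_bij[OF q p r U]])
    show "\<forall>s\<in>{b, c}. ?T s = s \<or> ?T s \<notin> {b, c}" using T by auto
    show "\<forall>y\<in>B'. pd_tau q p' r (U - {b, c}) y = (if ?T y \<in> {b, c} then ?T (?T y) else ?T y)"
      by (auto simp: pd_tau_def)
  qed simp
  moreover have "{s \<in> {b, c}. ?T s = s} = {}" using T by auto
  ultimately show ?thesis by simp
qed

lemma num_cycles_pd_psi_edge_leaf:
  assumes U: "\<forall>x\<in>U. q x \<in> U \<and> r x \<in> U"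
  shows "num_cycles B (pd_psi q r U) = num_cycles B' (pd_psi q r (U - {b, c})) + 2"
proof -
  let ?P = "pd_psi q r U"
  have Uq [simp]: "q x \<in> U \<longleftrightarrow> x \<in> U" and Ur [simp]: "r x \<in> U \<longleftrightarrow> x \<in> U" if "x \<in> B" for x
    using closed_mem_iff[of U q x] closed_mem_iff[of U r x] U that by auto
  have P: "?P b = b" "?P c = c" by (auto simp: pd_psi_def)
  have "num_cycles B ?P = num_cycles B' (pd_psi q r (U - {b, c})) + card {s \<in> {b, c}. ?P s = s}"
  proof (rule num_cycles_skip[OF finite pd_psi_bij[OF q r U]])
    show "\<forall>s\<in>{b, c}. ?P s = s \<or> ?P s \<notin> {b, c}" using P by auto
    show "\<forall>y\<in>B'. pd_psi q r (U - {b, c}) y = (if ?P y \<in> {b, c} then ?P (?P y) else ?P y)"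
      by (auto simp: pd_psi_def)
  qed simp
  moreover have "{s \<in> {b, c}. ?P s = s} = {b, c}" using P by auto
  ultimately show ?thesis by simp
qed

lemma pd_plane_counts_vertex_leaf:
  assumes U: "U \<subseteq> B" "\<forall>x\<in>U. p x \<in> U \<and> r x \<in> U"
    and IH: "pd_plane_counts \<lparr>blades = B', r0 = p', r1 = q, r2 = r\<rparr> (U - {b, c})"
  shows "pd_plane_counts \<lparr>blades = B, r0 = p, r1 = q, r2 = r\<rparr> U"
proof -
  have "B - U - {b, c} = B' - (U - {b, c})" by auto
  then have "num_cycles B (pd_tau p q r (B - U))
      = num_cycles B' (pd_tau p' q r (B' - (U - {b, c}))) + (if b \<in> U then 2 else 0)"
    using num_cycles_pd_tau_vertex_leaf[OF vertex_leaf_subsets(3)[OF U]] by simp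
  moreover note card_B
  ultimately show ?thesis
    using IH num_cycles_pd_tau_vertex_leaf[OF U(2)] num_cycles_pd_psi_vertex_leaf[OF U(2)]
    by (auto simp: pd_plane_counts_def)
qed

lemma pd_plane_counts_edge_leaf:
  assumes U: "U \<subseteq> B" "\<forall>x\<in>U. q x \<in> U \<and> r x \<in> U"
    and IH: "pd_plane_counts \<lparr>blades = B', r0 = q, r1 = p', r2 = r\<rparr> (U - {b, c})"
  shows "pd_plane_counts \<lparr>blades = B, r0 = q, r1 = p, r2 = r\<rparr> U"
proof -
  have "B - U - {b, c} = B' - (U - {b, c})" by auto
  then have "num_cycles B (pd_tau q p r (B - U)) = num_cycles B' (pd_tau q p' r (B' - (U - {b, c})))"
    using num_cycles_pd_tau_edge_leaf[OF edge_leaf_subsets(3)[OF U]] by simp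
  moreover note card_B
  ultimately show ?thesis
    using IH num_cycles_pd_tau_edge_leaf[OF U(2)] num_cycles_pd_psi_edge_leaf[OF U(2)]
    by (auto simp: pd_plane_counts_def)
qed

end

lemma pd_plane_counts_acyclic:
  assumes "hypermap H" and "blades H \<noteq> {}" and "connected_blades H"
    and "\<not> hg_has_cycle (hm_vertices H) (hm_hyperedges H) hm_inc"
    and "U \<subseteq> blades H" and "\<forall>x\<in>U. r0 H x \<in> U \<and> r2 H x \<in> U"
  shows "pd_plane_counts H U"
  using assms
proof (induction "card (blades H)" arbitrary: H U rule: less_induct)
  case less
  let ?B = "blades H"
  have H: "H = \<lparr>blades = ?B, r0 = r0 H, r1 = r1 H, r2 = r2 H\<rparr>" by simp
  have fin: "finite ?B" and inv: "fpf_involution ?B (r0 H)" "fpf_involution ?B (r1 H)"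
    "fpf_involution ?B (r2 H)" using less.prems(1) by (simp_all add: hypermap_def)
  show ?case
  proof (cases "card ?B \<le> 2")
    case True
    obtain x where "x \<in> ?B" using less.prems(2) by blast
    then show ?thesis by (rule pd_plane_counts_two_blades[OF less.prems(1) _ True])
  next
    case False
    obtain b where b: "b \<in> ?B" "r1 H b = r2 H b \<or> r0 H b = r2 H b"
      using hypermap_leaf_exists less.prems(1,2,4) by blast
    have not_loop: "\<not> (r0 H b = r2 H b \<and> r1 H b = r2 H b)"
      using connected_blades_card_le_2[OF less.prems(1,3) b(1)] False by blast
    show ?thesis
    proof (cases "r1 H b = r2 H b")
      case True
      interpret L: leaf_removal ?B "r0 H" "r1 H" "r2 H" b
        by unfold_locales (use fin inv b True not_loop in auto)
      note reduct = L.vertex_leaf_reduct[folded H, OF less.prems(1,3,4)]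
      note subsets = L.vertex_leaf_subsets[OF less.prems(5,6)]
      have "L.B' \<noteq> {}" using L.card_B \<open>\<not> card ?B \<le> 2\<close> by (intro notI) simp
      then have "pd_plane_counts \<lparr>blades = L.B', r0 = L.p', r1 = r1 H, r2 = r2 H\<rparr> (U - {b, L.c})"
        using L.card_B reduct subsets by (intro less.hyps) auto
      then show ?thesis using L.pd_plane_counts_vertex_leaf[OF less.prems(5,6)] H by simp
    next
      case False
      interpret L: leaf_removal ?B "r1 H" "r0 H" "r2 H" b
        by unfold_locales (use fin inv b False in auto)
      note reduct = L.edge_leaf_reduct[folded H, OF less.prems(1,3,4)]
      note subsets = L.edge_leaf_subsets[OF less.prems(5,6)]
      have "L.B' \<noteq> {}" using L.card_B \<open>\<not> card ?B \<le> 2\<close> by (intro notI) simp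
      then have "pd_plane_counts \<lparr>blades = L.B', r0 = r0 H, r1 = L.p', r2 = r2 H\<rparr> (U - {b, L.c})"
        using L.card_B reduct subsets by (intro less.hyps) auto
      then show ?thesis using L.pd_plane_counts_edge_leaf[OF less.prems(5,6)] H by simp
    qed
  qed
qed

lemma pd_euler_genus_acyclic_hypertree:
  assumes T: "hypertree_map T" and acyclic: "\<not> hg_has_cycle (hm_vertices T) (hm_hyperedges T) hm_inc"
    and A: "A \<subseteq> hm_hyperedges T"
  shows "pd_euler_genus T A = 0"
proof -
  let ?B = "blades T" and ?U = "\<Union>A"
  have H: "hypermap T" and conn: "connected_blades T"
    using T connected_blades_if_hg_connected by (auto simp: hypertree_map_def hg_hypertree_def)
  note genus = pd_euler_genus_eq[OF H A] and U = hyperedges_Union_closed[OF H A]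
  show ?thesis
  proof (cases "?B = {}")
    case True
    then show ?thesis using genus by (simp add: num_orbits_def num_cycles_def)
  next
    case False
    have "pd_plane_counts T ?U" using pd_plane_counts_acyclic[OF H False conn acyclic U] .
    then obtain k1 k2 k3 where k: "num_cycles ?B (pd_tau (r0 T) (r1 T) (r2 T) ?U) = 2 * k1"
      "num_cycles ?B (pd_psi (r0 T) (r2 T) ?U) = 2 * k2"
      "num_cycles ?B (pd_tau (r0 T) (r1 T) (r2 T) (?B - ?U)) = 2 * k3"
      "2 * k1 + 2 * k2 + 2 * k3 = card ?B + 4"
      unfolding pd_plane_counts_def by (metis evenE)
    then have "int (card ?B) div 2 = int k1 + int k2 + int k3 - 2" by linarith
    then show ?thesis using genus k num_orbits_pd_eq_1[OF H conn False U(2)] by simp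
  qed
qed

theorem mainTheorem10:
  fixes T :: "'b hypermap"
  assumes "hypertree_map T"
    and "\<not> hg_has_cycle (hm_vertices T) (hm_hyperedges T) hm_inc"
  shows "pd_eg_poly T = (\<lambda>z. 2 ^ card (hm_hyperedges T))"
proof
  fix z :: real
  have "finite (hm_hyperedges T)"
    using assms(1) by (simp add: hypertree_map_def hypermap_def hm_hyperedges_def)
  moreover have "pd_eg_poly T z = card (Pow (hm_hyperedges T))"
    unfolding pd_eg_poly_def using pd_euler_genus_acyclic_hypertree[OF assms] by simp
  ultimately show "pd_eg_poly T z = 2 ^ card (hm_hyperedges T)" by (simp add: card_Pow)
qed

end
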